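(* Let $R=S(M_0)$ and $L=\mathcal{A}M_{-1}=S(M_0)\otimes M_{-1}$, viewed as an $R$-module via $\mathbf y\cdot(\mathbf y'\odot x^{\mathbf k})=\mathbf y\odot\mathbf y'\odot x^{\mathbf k}$. Equip $L$ with the bilinear product $\rhd$, with $\nabla\colon L\to \mathrm{End}_{\mathbb K}(L)$, $\nabla_X Y=X\rhd Y$, and with the anchor $\rho\colon L\to \mathrm{Der}_{\mathbb K}(S(M_0),S(M_0))$, $\rho(X)(\mathbf y)=X\rhd \mathbf y$. Then $(L,\nabla,\rho)$ is a pre-Lie-Rinehart algebra over $R$, the Lie bracket being $[X,Y]=X\rhd Y-Y\rhd X$.
   Context: Fix a field $\mathbb K$ and a finite set $C$ of decorations. Let $\overline N(C)$ be the commutative polynomial algebra over $\mathbb K$ in the variables $x^a_j$, $a\in C$, $j\in\{-1,0,1,2,\dots\}$. A monomial is $x^{\mathbf k}=\prod_{j,a}(x^a_j)^{k^a_j}$ with finitely supported nonnegative integer exponents; its weight is $\mathrm{wt}(x^{\mathbf k})=\sum_{j,a} j\,k^a_j$. Let $\partial$ be the derivation of $\overline N(C)$ with $\partial x^a_j=x^a_{j+1}$. For $n\in\{-1,0\}$ let $M_n$ be the span of the monomials of weight $n$ (non-constant ones for $n=0$). $S(V)$ denotes the symmetric algebra of $V$, with product $\odot$ and unit $\mathbf 1$; elements of $S(M_0)$ are called multiaromas. Elements of $\mathcal{A}M_{-1}$ are spanned by $\mathbf y\odot x^{\mathbf k}$ with $\mathbf y\in S(M_0)$ a product of monomials and $x^{\mathbf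 k}\in M_{-1}$. The product $\rhd$ is defined (and extended bilinearly) as follows. For monomials $x^{\mathbf k}\in M_{-1}$ and $P\in M_0\cup M_{-1}$, $x^{\mathbf k}\rhd P=x^{\mathbf k}\cdot\partial P$ (product in $\overline N(C)$). For $\mathbf y=x^{\kappa^1}\odot\cdots\odot x^{\kappa^m}\in S(M_0)$: $x^{\mathbf k}\rhd \mathbf y=\sum_{i=1}^m x^{\kappa^1}\odot\cdots\odot (x^{\mathbf k}\rhd x^{\kappa^i})\odot\cdots\odot x^{\kappa^m}$ and $(\mathbf y^1\odot x^{\mathbf k})\rhd \mathbf y=\mathbf y^1\odot(x^{\mathbf k}\rhd\mathbf y)$. Finally $(\mathbf y^1\odot x^{\mathbf k^1})\rhd(\mathbf y^2\odot x^{\mathbf k^2})=\mathbf y^1\odot(x^{\mathbf k^1}\rhd\mathbf y^2)\odot x^{\mathbf k^2}+\mathbf y^1\odot\mathbf y^2\odot(x^{\mathbf k^1}\rhd x^{\mathbf k^2})$. Definition: given a unital commutative $\mathbb K$-algebra $R$ and an $R$-module $L$ with an $R$-linear map $\rho\colon L\to\mathrm{Der}_{\mathbb K}(R,R)$ and a map $\nabla\colon L\to\mathrm{End}_{\mathbb K}(L)$, write $X\rhd Y=\nabla_XY$ and $[X,Y]=X\rhd Y-Y\rhd X$. Then $L$ is a pre-Lie-Rinehart algebra if: $(L,[-,-])$ is a Lie algebra over $\mathbb K$; $\rho$ is a Lie algebra homomorphism; for $f\in R$, $X,Y\in L$, $[X,fY]=(\rho(X)f)Y+f[X,Y]$; and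 $(L,\rhd)$ is pre-Lie: $X\rhd(Y\rhd Z)-(X\rhd Y)\rhd Z=Y\rhd(X\rhd Z)-(Y\rhd X)\rhd Z$. *)

theory Defs
  imports Main "HOL-Library.Multiset" "HOL-Library.Function_Algebras"
begin

text \<open>A K-vector space is realised inside a function space 'b => 'k with pointwise
  addition (from Function_Algebras) and the scalar multiplication below.\<close>

definition smult :: "'k::times \<Rightarrow> ('b \<Rightarrow> 'k) \<Rightarrow> ('b \<Rightarrow> 'k)" (infixr "\<cdot>\<^sub>s" 75) where
  "c \<cdot>\<^sub>s f = (\<lambda>z. c * f z)"

definition supp :: "('b \<Rightarrow> 'k::zero) \<Rightarrow> 'b set" where
  "supp f = {b. f b \<noteq> 0}"

definition ind :: "'b \<Rightarrow> ('b \<Rightarrow> 'k::{zero,one})" where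
  "ind b = (\<lambda>z. if z = b then 1 else 0)"

definition bilin :: "('a \<Rightarrow> 'b \<Rightarrow> ('c \<Rightarrow> 'k::comm_ring_1)) \<Rightarrow> ('a \<Rightarrow> 'k) \<Rightarrow> ('b \<Rightarrow> 'k) \<Rightarrow> ('c \<Rightarrow> 'k)" where
  "bilin p X Y = (\<Sum>a\<in>supp X. \<Sum>b\<in>supp Y. (X a * Y b) \<cdot>\<^sub>s p a b)"

definition subspace :: "('b \<Rightarrow> 'k::field) set \<Rightarrow> bool" where
  "subspace V \<longleftrightarrow> 0 \<in> V \<and> (\<forall>f\<in>V. \<forall>g\<in>V. f + g \<in> V) \<and> (\<forall>c. \<forall>f\<in>V. c \<cdot>\<^sub>s f \<in> V)"

definition klinear_on :: "('a \<Rightarrow> 'k::field) set \<Rightarrow> (('a \<Rightarrow> 'k) \<Rightarrow> ('b \<Rightarrow> 'k)) \<Rightarrow> bool" where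
  "klinear_on V T \<longleftrightarrow> (\<forall>f\<in>V. \<forall>g\<in>V. T (f + g) = T f + T g) \<and> (\<forall>c. \<forall>f\<in>V. T (c \<cdot>\<^sub>s f) = c \<cdot>\<^sub>s T f)"

definition comm_algebra :: "('r \<Rightarrow> 'k::field) set \<Rightarrow> (('r \<Rightarrow> 'k) \<Rightarrow> ('r \<Rightarrow> 'k) \<Rightarrow> ('r \<Rightarrow> 'k)) \<Rightarrow> ('r \<Rightarrow> 'k) \<Rightarrow> bool" where
  "comm_algebra R mul one \<longleftrightarrow> subspace R \<and> one \<in> R \<and>
     (\<forall>f\<in>R. \<forall>g\<in>R. mul f g \<in> R) \<and>
     (\<forall>f\<in>R. \<forall>g\<in>R. \<forall>h\<in>R. mul (mul f g) h = mul f (mul g h)) \<and>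
     (\<forall>f\<in>R. \<forall>g\<in>R. mul f g = mul g f) \<and>
     (\<forall>f\<in>R. mul one f = f) \<and>
     (\<forall>f\<in>R. \<forall>g\<in>R. \<forall>h\<in>R. mul f (g + h) = mul f g + mul f h) \<and>
     (\<forall>c. \<forall>f\<in>R. \<forall>g\<in>R. mul (c \<cdot>\<^sub>s f) g = c \<cdot>\<^sub>s mul f g)"

definition is_module :: "('r \<Rightarrow> 'k::field) set \<Rightarrow> (('r \<Rightarrow> 'k) \<Rightarrow> ('r \<Rightarrow> 'k) \<Rightarrow> ('r \<Rightarrow> 'k)) \<Rightarrow> ('r \<Rightarrow> 'k)
     \<Rightarrow> ('l \<Rightarrow> 'k) set \<Rightarrow> (('r \<Rightarrow> 'k) \<Rightarrow> ('l \<Rightarrow> 'k) \<Rightarrow> ('l \<Rightarrow> 'k)) \<Rightarrow> bool" where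
  "is_module R mul one L act \<longleftrightarrow> subspace L \<and>
     (\<forall>f\<in>R. \<forall>X\<in>L. act f X \<in> L) \<and>
     (\<forall>f\<in>R. \<forall>X\<in>L. \<forall>Y\<in>L. act f (X + Y) = act f X + act f Y) \<and>
     (\<forall>f\<in>R. \<forall>g\<in>R. \<forall>X\<in>L. act (f + g) X = act f X + act g X) \<and>
     (\<forall>f\<in>R. \<forall>g\<in>R. \<forall>X\<in>L. act (mul f g) X = act f (act g X)) \<and>
     (\<forall>X\<in>L. act one X = X) \<and>
     (\<forall>c. \<forall>f\<in>R. \<forall>X\<in>L. act (c \<cdot>\<^sub>s f) X = c \<cdot>\<^sub>s act f X)"

definition is_derivation :: "('r \<Rightarrow> 'k::field) set \<Rightarrow> (('r \<Rightarrow> 'k) \<Rightarrow> ('r \<Rightarrow> 'k) \<Rightarrow> ('r \<Rightarrow> 'k))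
     \<Rightarrow> (('r \<Rightarrow> 'k) \<Rightarrow> ('r \<Rightarrow> 'k)) \<Rightarrow> bool" where
  "is_derivation R mul D \<longleftrightarrow> (\<forall>f\<in>R. D f \<in> R) \<and> klinear_on R D \<and>
     (\<forall>f\<in>R. \<forall>g\<in>R. D (mul f g) = mul (D f) g + mul f (D g))"

definition pre_lie_rinehart ::
  "('r \<Rightarrow> 'k::field) set \<Rightarrow> (('r \<Rightarrow> 'k) \<Rightarrow> ('r \<Rightarrow> 'k) \<Rightarrow> ('r \<Rightarrow> 'k)) \<Rightarrow> ('r \<Rightarrow> 'k)
   \<Rightarrow> ('l \<Rightarrow> 'k) set \<Rightarrow> (('r \<Rightarrow> 'k) \<Rightarrow> ('l \<Rightarrow> 'k) \<Rightarrow> ('l \<Rightarrow> 'k))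
   \<Rightarrow> (('l \<Rightarrow> 'k) \<Rightarrow> ('r \<Rightarrow> 'k) \<Rightarrow> ('r \<Rightarrow> 'k))
   \<Rightarrow> (('l \<Rightarrow> 'k) \<Rightarrow> ('l \<Rightarrow> 'k) \<Rightarrow> ('l \<Rightarrow> 'k)) \<Rightarrow> bool" where
  "pre_lie_rinehart R mul one L act rho nabla \<longleftrightarrow>
     (let br = (\<lambda>X Y. nabla X Y - nabla Y X) in
     \<comment> \<open>setting: R unital commutative K-algebra, L an R-module\<close>
     comm_algebra R mul one \<and> is_module R mul one L act \<and>
     \<comment> \<open>rho : L -> Der_K(R,R), R-linear\<close>
     (\<forall>X\<in>L. is_derivation R mul (rho X)) \<and>
     (\<forall>X\<in>L. \<forall>Y\<in>L. \<forall>f\<in>R. rho (X + Y) f = rho X f + rho Y f) \<and>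
     (\<forall>g\<in>R. \<forall>X\<in>L. \<forall>f\<in>R. rho (act g X) f = mul g (rho X f)) \<and>
     \<comment> \<open>nabla : L -> End_K(L)\<close>
     (\<forall>X\<in>L. (\<forall>Y\<in>L. nabla X Y \<in> L) \<and> klinear_on L (nabla X)) \<and>
     \<comment> \<open>(L, [-,-]) is a Lie algebra over K\<close>
     (\<forall>X\<in>L. \<forall>Y\<in>L. br X Y \<in> L) \<and>
     (\<forall>Z\<in>L. klinear_on L (\<lambda>X. br X Z) \<and> klinear_on L (br Z)) \<and>
     (\<forall>X\<in>L. br X X = 0) \<and>
     (\<forall>X\<in>L. \<forall>Y\<in>L. \<forall>Z\<in>L. br X (br Y Z) + br Y (br Z X) + br Z (br X Y) = 0) \<and>
     \<comment> \<open>rho is a Lie algebra homomorphism (into Der_K(R,R) with the commutator bracket)\<close>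
     (\<forall>c. \<forall>X\<in>L. \<forall>f\<in>R. rho (c \<cdot>\<^sub>s X) f = c \<cdot>\<^sub>s rho X f) \<and>
     (\<forall>X\<in>L. \<forall>Y\<in>L. \<forall>f\<in>R. rho (br X Y) f = rho X (rho Y f) - rho Y (rho X f)) \<and>
     \<comment> \<open>Leibniz rule\<close>
     (\<forall>f\<in>R. \<forall>X\<in>L. \<forall>Y\<in>L. br X (act f Y) = act (rho X f) Y + act f (br X Y)) \<and>
     \<comment> \<open>pre-Lie identity\<close>
     (\<forall>X\<in>L. \<forall>Y\<in>L. \<forall>Z\<in>L.
        nabla X (nabla Y Z) - nabla (nabla X Y) Z = nabla Y (nabla X Z) - nabla (nabla Y X) Z))"

text \<open>Variables x^a_j are pairs (a, j) with a a decoration and j an integer index; only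
  indices j >= -1 are admissible.  Monomials are finite multisets of variables
  (multiplicity = exponent).  Elements of the polynomial algebra are finitely supported
  coefficient functions on monomials.\<close>

type_synonym 'c mon = "('c \<times> int) multiset"

definition valid_mon :: "'c mon \<Rightarrow> bool" where
  "valid_mon m \<longleftrightarrow> (\<forall>v\<in>#m. snd v \<ge> -1)"

definition wt :: "'c mon \<Rightarrow> int" where
  "wt m = sum_mset (image_mset snd m)"

definition M0_mons :: "'c mon set" where
  "M0_mons = {m. valid_mon m \<and> wt m = 0 \<and> m \<noteq> {#}}"

definition Mm1_mons :: "'c mon set" where
  "Mm1_mons = {m. valid_mon m \<and> wt m = -1}"

definition shift :: "'c \<times> int \<Rightarrow> 'c \<times> int" where
  "shift v = (fst v, snd v + 1)"

text \<open>The monomials occurring in x^k \<rhd> x^p = x^k * \<partial> x^p: for each variable v of p (with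
  multiplicity count p v as coefficient), k + (p - v) + shift v.\<close>
definition dterm :: "'c mon \<Rightarrow> 'c mon \<Rightarrow> ('c \<times> int) \<Rightarrow> 'c mon" where
  "dterm k p v = k + (p - {#v#}) + {#shift v#}"

text \<open>Symmetric algebra S(M_0): basis = finite multisets of M_0-monomials (odot = multiset sum).
  L = S(M_0) (x) M_{-1}: basis = pairs (y, k).\<close>

definition R_car :: "('c mon multiset \<Rightarrow> 'k::field) set" where
  "R_car = {f. finite (supp f) \<and> (\<forall>y\<in>supp f. \<forall>p\<in>#y. p \<in> M0_mons)}"

definition L_car :: "('c mon multiset \<times> 'c mon \<Rightarrow> 'k::field) set" where
  "L_car = {X. finite (supp X) \<and> (\<forall>(y,k)\<in>supp X. (\<forall>p\<in>#y. p \<in> M0_mons) \<and> k \<in> Mm1_mons)}"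

definition R_mult :: "('c mon multiset \<Rightarrow> 'k::field) \<Rightarrow> ('c mon multiset \<Rightarrow> 'k) \<Rightarrow> ('c mon multiset \<Rightarrow> 'k)" where
  "R_mult = bilin (\<lambda>y y'. ind (y + y'))"

definition R_one :: "'c mon multiset \<Rightarrow> 'k::field" where
  "R_one = ind {#}"

definition L_smul :: "('c mon multiset \<Rightarrow> 'k::field) \<Rightarrow> ('c mon multiset \<times> 'c mon \<Rightarrow> 'k)
     \<Rightarrow> ('c mon multiset \<times> 'c mon \<Rightarrow> 'k)" where
  "L_smul = bilin (\<lambda>y' (y, k). ind (y' + y, k))"

text \<open>x^k \<rhd> y for a multiaroma basis element y (product of M_0 monomials), then multiplied by y1:
  y1 odot (x^k \<rhd> y) as a basis expansion.\<close>
definition tri_aroma :: "'c mon multiset \<Rightarrow> 'c mon \<Rightarrow> 'c mon multiset \<Rightarrow> ('c mon multiset \<Rightarrow> 'k::field)" where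
  "tri_aroma y1 k y = (\<Sum>p\<in>set_mset y. of_nat (count y p) \<cdot>\<^sub>s
      (\<Sum>v\<in>set_mset p. of_nat (count p v) \<cdot>\<^sub>s ind (y1 + (y - {#p#}) + {#dterm k p v#})))"

text \<open>Basis product (y1 odot x^k1) \<rhd> (y2 odot x^k2).\<close>
definition tri_basis :: "'c mon multiset \<times> 'c mon \<Rightarrow> 'c mon multiset \<times> 'c mon
     \<Rightarrow> ('c mon multiset \<times> 'c mon \<Rightarrow> 'k::field)" where
  "tri_basis b1 b2 = (case b1 of (y1, k1) \<Rightarrow> case b2 of (y2, k2) \<Rightarrow>
      (\<Sum>p\<in>set_mset y2. of_nat (count y2 p) \<cdot>\<^sub>s
         (\<Sum>v\<in>set_mset p. of_nat (count p v) \<cdot>\<^sub>s ind (y1 + (y2 - {#p#}) + {#dterm k1 p v#}, k2)))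
    + (\<Sum>v\<in>set_mset k2. of_nat (count k2 v) \<cdot>\<^sub>s ind (y1 + y2, dterm k1 k2 v)))"

definition L_nabla :: "('c mon multiset \<times> 'c mon \<Rightarrow> 'k::field) \<Rightarrow> ('c mon multiset \<times> 'c mon \<Rightarrow> 'k)
     \<Rightarrow> ('c mon multiset \<times> 'c mon \<Rightarrow> 'k)" where
  "L_nabla = bilin tri_basis"

definition L_rho :: "('c mon multiset \<times> 'c mon \<Rightarrow> 'k::field) \<Rightarrow> ('c mon multiset \<Rightarrow> 'k)
     \<Rightarrow> ('c mon multiset \<Rightarrow> 'k)" where
  "L_rho = bilin (\<lambda>(y1, k) y. tri_aroma y1 k y)"

end

theory Submission
  imports Defs
begin

(* All operations are bilinear extensions of products of basis elements y \<odot> x^k, so every identity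
   is checked on basis elements.  There X \<rhd> - is y1 \<odot> (x^k1 \<partial>), acting as a derivation on one
   monomial factor at a time.  In X \<rhd> (Y \<rhd> Z) - (X \<rhd> Y) \<rhd> Z everything cancels except the terms in
   which both x^k1 \<partial> and x^k2 \<partial> hit factors of Z: two different monomials, two different variables
   of one monomial, or one variable twice.  This is symmetric in X and Y, which is the pre-Lie
   identity, and the Jacobi identity for the commutator follows.  Extending \<rhd> to the constant
   monomial 1, outside M_{-1}, the anchor is y \<mapsto> X \<rhd> (y \<odot> 1); hence \<rho>(X) is a derivation by the
   Leibniz rule for \<rhd>, \<rho> is R-linear because \<rhd> is R-linear in its first argument, and \<rho> is a
   Lie morphism by the pre-Lie identity. *)

section \<open>Finitely supported vectors\<close>

abbreviation fin_supp :: "('b \<Rightarrow> 'k::zero) \<Rightarrow> bool" where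
  "fin_supp f \<equiv> finite (supp f)"

lemma sum_fun_apply: "(\<Sum>a\<in>A. g a) z = (\<Sum>a\<in>A. g a z)"
  by (induction A rule: infinite_finite_induct) auto

lemma sum_mset_fun_apply: "(\<Sum>x\<in>#M. g x) z = (\<Sum>x\<in>#M. g x z)"
  by (induction M) auto

lemma smult_apply: "(c \<cdot>\<^sub>s f) z = c * f z"
  by (simp add: smult_def)

lemma smult_zero_left [simp]: "0 \<cdot>\<^sub>s f = (0 :: _ \<Rightarrow> 'k::comm_ring_1)"
  by (simp add: smult_def fun_eq_iff)

lemma smult_diff_right: "c \<cdot>\<^sub>s (f - g) = c \<cdot>\<^sub>s f - c \<cdot>\<^sub>s (g :: _ \<Rightarrow> 'k::comm_ring_1)"
  by (simp add: smult_def fun_eq_iff right_diff_distrib)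

lemma in_supp_iff [simp]: "x \<in> supp f \<longleftrightarrow> f x \<noteq> 0"
  by (simp add: supp_def)

lemma supp_zero [simp]: "supp 0 = {}"
  by auto

lemma supp_ind [simp]: "supp (ind b :: _ \<Rightarrow> 'k::comm_ring_1) = {b}"
  by (auto simp: ind_def split: if_splits)

lemma supp_add_subset: "supp (f + g :: _ \<Rightarrow> 'k::comm_ring_1) \<subseteq> supp f \<union> supp g"
  by auto

lemma supp_diff_subset: "supp (f - g :: _ \<Rightarrow> 'k::comm_ring_1) \<subseteq> supp f \<union> supp g"
  by auto

lemma supp_smult_subset: "supp (c \<cdot>\<^sub>s f :: _ \<Rightarrow> 'k::comm_ring_1) \<subseteq> supp f"
  by (auto simp: smult_apply)

lemma supp_sum_mset_subset:
  "supp (\<Sum>x\<in>#M. g x :: _ \<Rightarrow> 'k::comm_ring_1) \<subseteq> (\<Union>x\<in>set_mset M. supp (g x))"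
proof (induction M)
  case (add x M)
  then show ?case using supp_add_subset[of "g x" "\<Sum>x\<in>#M. g x"] by auto
qed (simp add: supp_def)

lemma fin_supp_add [simp]: "fin_supp f \<Longrightarrow> fin_supp g \<Longrightarrow> fin_supp (f + g :: _ \<Rightarrow> 'k::comm_ring_1)"
  by (meson finite_UnI finite_subset supp_add_subset)

lemma fin_supp_diff [simp]: "fin_supp f \<Longrightarrow> fin_supp g \<Longrightarrow> fin_supp (f - g :: _ \<Rightarrow> 'k::comm_ring_1)"
  by (meson finite_UnI finite_subset supp_diff_subset)

lemma fin_supp_smult [simp]: "fin_supp f \<Longrightarrow> fin_supp (c \<cdot>\<^sub>s f :: _ \<Rightarrow> 'k::comm_ring_1)"
  by (meson finite_subset supp_smult_subset)

lemma fin_supp_sum_mset [simp]: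
  "(\<And>x. x \<in># M \<Longrightarrow> fin_supp (g x)) \<Longrightarrow> fin_supp (\<Sum>x\<in>#M. g x :: _ \<Rightarrow> 'k::comm_ring_1)"
  by (induction M) auto

lemma fin_supp_sum [simp]:
  "(\<And>x. x \<in> A \<Longrightarrow> fin_supp (g x)) \<Longrightarrow> fin_supp (\<Sum>x\<in>A. g x :: _ \<Rightarrow> 'k::comm_ring_1)"
  by (induction A rule: infinite_finite_induct) auto

definition lin_ext :: "('a \<Rightarrow> ('b \<Rightarrow> 'k::comm_ring_1)) \<Rightarrow> ('a \<Rightarrow> 'k) \<Rightarrow> ('b \<Rightarrow> 'k)" where
  "lin_ext f X = (\<Sum>a\<in>supp X. X a \<cdot>\<^sub>s f a)"

lemma lin_ext_apply: "lin_ext f X z = (\<Sum>a\<in>supp X. X a * f a z)"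
  by (simp add: lin_ext_def sum_fun_apply smult_apply)

lemma lin_ext_apply_superset:
  assumes "finite A" "supp X \<subseteq> A"
  shows "lin_ext f X z = (\<Sum>a\<in>A. X a * f a z)"
  unfolding lin_ext_apply by (rule sum.mono_neutral_left) (use assms in auto)

lemma lin_ext_add:
  assumes "fin_supp X" "fin_supp Y"
  shows "lin_ext f (X + Y) = lin_ext f X + lin_ext f Y"
proof
  fix z
  let ?A = "supp X \<union> supp Y"
  have "lin_ext f (X + Y) z = (\<Sum>a\<in>?A. (X + Y) a * f a z)"
    by (rule lin_ext_apply_superset) (use assms supp_add_subset[of X Y] in auto)
  also have "\<dots> = (\<Sum>a\<in>?A. X a * f a z) + (\<Sum>a\<in>?A. Y a * f a z)"
    by (simp add: ring_distribs sum.distrib)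
  also have "\<dots> = lin_ext f X z + lin_ext f Y z"
    using assms lin_ext_apply_superset[of ?A X f z] lin_ext_apply_superset[of ?A Y f z] by simp
  finally show "lin_ext f (X + Y) z = (lin_ext f X + lin_ext f Y) z" by simp
qed

lemma lin_ext_diff:
  assumes "fin_supp X" "fin_supp Y"
  shows "lin_ext f (X - Y) = lin_ext f X - lin_ext f Y"
proof
  fix z
  let ?A = "supp X \<union> supp Y"
  have "lin_ext f (X - Y) z = (\<Sum>a\<in>?A. (X - Y) a * f a z)"
    by (rule lin_ext_apply_superset) (use assms supp_diff_subset[of X Y] in auto)
  also have "\<dots> = (\<Sum>a\<in>?A. X a * f a z) - (\<Sum>a\<in>?A. Y a * f a z)"
    by (simp add: left_diff_distrib sum_subtractf)
  also have "\<dots> = lin_ext f X z - lin_ext f Y z"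
    using assms lin_ext_apply_superset[of ?A X f z] lin_ext_apply_superset[of ?A Y f z] by simp
  finally show "lin_ext f (X - Y) z = (lin_ext f X - lin_ext f Y) z" by simp
qed

lemma lin_ext_smult:
  assumes "fin_supp X"
  shows "lin_ext f (c \<cdot>\<^sub>s X) = c \<cdot>\<^sub>s lin_ext f X"
proof
  fix z
  have "lin_ext f (c \<cdot>\<^sub>s X) z = (\<Sum>a\<in>supp X. (c \<cdot>\<^sub>s X) a * f a z)"
    by (rule lin_ext_apply_superset) (use assms supp_smult_subset[of c X] in auto)
  also have "\<dots> = c * lin_ext f X z"
    by (simp add: lin_ext_apply smult_apply sum_distrib_left mult.assoc)
  finally show "lin_ext f (c \<cdot>\<^sub>s X) z = (c \<cdot>\<^sub>s lin_ext f X) z" by (simp add: smult_apply)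
qed

lemma lin_ext_zero [simp]: "lin_ext f 0 = 0"
  by (simp add: lin_ext_def)

lemma lin_ext_ind [simp]: "lin_ext f (ind b) = f b"
  unfolding lin_ext_def supp_ind by (simp add: ind_def smult_def)

lemma lin_ext_ind_self: "fin_supp X \<Longrightarrow> lin_ext ind X = X"
  by (rule ext) (simp add: lin_ext_apply ind_def if_distrib[of "(*) _"] sum.delta' cong: if_cong)

lemma lin_ext_fun_add: "lin_ext (\<lambda>a. f a + g a) X = lin_ext f X + lin_ext g X"
  by (rule ext) (simp add: lin_ext_apply ring_distribs sum.distrib)

lemma lin_ext_fun_diff: "lin_ext (\<lambda>a. f a - g a) X = lin_ext f X - lin_ext g X"
  by (rule ext) (simp add: lin_ext_apply right_diff_distrib sum_subtractf)

lemma lin_ext_fun_smult: "lin_ext (\<lambda>a. c \<cdot>\<^sub>s f a) X = c \<cdot>\<^sub>s lin_ext f X"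
  by (rule ext) (simp add: lin_ext_apply smult_apply sum_distrib_left ac_simps)

lemma lin_ext_cong: "(\<And>a. a \<in> supp X \<Longrightarrow> f a = g a) \<Longrightarrow> lin_ext f X = lin_ext g X"
  by (simp add: lin_ext_def)

lemma supp_lin_ext_subset: "supp (lin_ext f X) \<subseteq> (\<Union>a\<in>supp X. supp (f a))"
proof
  fix z assume "z \<in> supp (lin_ext f X)"
  then have "(\<Sum>a\<in>supp X. X a * f a z) \<noteq> 0" by (simp add: lin_ext_apply)
  then obtain a where "a \<in> supp X" "X a * f a z \<noteq> 0"
    by (meson sum.neutral)
  then show "z \<in> (\<Union>a\<in>supp X. supp (f a))" by (metis UN_iff in_supp_iff mult_zero_right)
qed

lemma fin_supp_lin_ext [simp]: "fin_supp X \<Longrightarrow> (\<And>a. fin_supp (f a)) \<Longrightarrow> fin_supp (lin_ext f X)"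
  by (rule finite_subset[OF supp_lin_ext_subset]) auto

lemma lin_ext_sum_mset:
  "(\<And>x. x \<in># M \<Longrightarrow> fin_supp (g x)) \<Longrightarrow> lin_ext f (\<Sum>x\<in>#M. g x) = (\<Sum>x\<in>#M. lin_ext f (g x))"
  by (induction M) (auto simp: lin_ext_add)

definition fin_linear :: "(('a \<Rightarrow> 'k::comm_ring_1) \<Rightarrow> ('b \<Rightarrow> 'k)) \<Rightarrow> bool" where
  "fin_linear T \<longleftrightarrow>
     (\<forall>X Y. fin_supp X \<longrightarrow> fin_supp Y \<longrightarrow> T (X + Y) = T X + T Y) \<and>
     (\<forall>c X. fin_supp X \<longrightarrow> T (c \<cdot>\<^sub>s X) = c \<cdot>\<^sub>s T X)"

lemma fin_linear_add: "fin_linear T \<Longrightarrow> fin_supp X \<Longrightarrow> fin_supp Y \<Longrightarrow> T (X + Y) = T X + T Y"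
  by (simp add: fin_linear_def)

lemma fin_linear_smult: "fin_linear T \<Longrightarrow> fin_supp X \<Longrightarrow> T (c \<cdot>\<^sub>s X) = c \<cdot>\<^sub>s T X"
  by (simp add: fin_linear_def)

lemma fin_linear_sum:
  assumes "fin_linear T" "finite A"
  shows "T (\<Sum>a\<in>A. X a \<cdot>\<^sub>s ind a) = (\<Sum>a\<in>A. X a \<cdot>\<^sub>s T (ind a))"
  using assms(2)
proof (induction A rule: finite_induct)
  case empty
  have "T 0 = 0" using fin_linear_smult[OF assms(1), of 0 0] by simp
  then show ?case by (simp only: sum.empty)
next
  case (insert a A)
  have "T (X a \<cdot>\<^sub>s ind a + (\<Sum>a\<in>A. X a \<cdot>\<^sub>s ind a))
      = T (X a \<cdot>\<^sub>s ind a) + T (\<Sum>a\<in>A. X a \<cdot>\<^sub>s ind a)"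
    by (rule fin_linear_add[OF assms(1)]) (use insert in auto)
  also have "T (X a \<cdot>\<^sub>s ind a) = X a \<cdot>\<^sub>s T (ind a)"
    by (rule fin_linear_smult[OF assms(1)]) simp
  finally show ?case by (simp only: sum.insert[OF insert.hyps] insert.IH)
qed

lemma fin_linear_conv_lin_ext: "fin_linear T \<Longrightarrow> fin_supp X \<Longrightarrow> T X = lin_ext (\<lambda>b. T (ind b)) X"
  using fin_linear_sum[of T "supp X" X] lin_ext_ind_self[of X] by (simp add: lin_ext_def)

lemma fin_linear_eq_on_basis:
  assumes "fin_linear T" "fin_linear S" "\<And>b. T (ind b) = S (ind b)" "fin_supp X"
  shows "T X = S X"
  using fin_linear_conv_lin_ext[OF assms(1,4)] fin_linear_conv_lin_ext[OF assms(2,4)] assms(3)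
  by simp

lemma fin_linear_id [intro!]: "fin_linear (\<lambda>X. X)"
  by (simp add: fin_linear_def)

lemma fin_linear_add_fun [intro!]: "fin_linear T \<Longrightarrow> fin_linear S \<Longrightarrow> fin_linear (\<lambda>X. T X + S X)"
  by (simp add: fin_linear_def fun_eq_iff ring_distribs smult_apply)

lemma fin_linear_diff_fun [intro!]: "fin_linear T \<Longrightarrow> fin_linear S \<Longrightarrow> fin_linear (\<lambda>X. T X - S X)"
  by (simp add: fin_linear_def fun_eq_iff right_diff_distrib smult_apply)

lemma fin_linear_lin_ext_comp [intro!]:
  "fin_linear T \<Longrightarrow> (\<And>X. fin_supp X \<Longrightarrow> fin_supp (T X)) \<Longrightarrow> fin_linear (\<lambda>X. lin_ext f (T X))"
  by (simp add: fin_linear_def lin_ext_add lin_ext_smult)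

lemma bilinear_eq_on_basis:
  fixes F G :: "('a \<Rightarrow> 'k::comm_ring_1) \<Rightarrow> ('b \<Rightarrow> 'k) \<Rightarrow> ('c \<Rightarrow> 'k)"
  assumes "\<And>X. fin_supp X \<Longrightarrow> fin_linear (F X)" "\<And>X. fin_supp X \<Longrightarrow> fin_linear (G X)"
    and "\<And>b. fin_linear (\<lambda>X. F X (ind b))" "\<And>b. fin_linear (\<lambda>X. G X (ind b))"
    and "\<And>a b. F (ind a) (ind b) = G (ind a) (ind b)"
    and "fin_supp X" "fin_supp Y"
  shows "F X Y = G X Y"
proof -
  have "F X (ind b) = G X (ind b)" for b
    using fin_linear_eq_on_basis[OF assms(3)[of b] assms(4)[of b] _ assms(6)] assms(5) by blast
  then show ?thesis
    using fin_linear_eq_on_basis[OF assms(1)[OF assms(6)] assms(2)[OF assms(6)] _ assms(7)] by blast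
qed

lemma trilinear_eq_on_basis:
  fixes F G :: "('a \<Rightarrow> 'k::comm_ring_1) \<Rightarrow> ('b \<Rightarrow> 'k) \<Rightarrow> ('c \<Rightarrow> 'k) \<Rightarrow> ('d \<Rightarrow> 'k)"
  assumes "\<And>X Y. fin_supp X \<Longrightarrow> fin_supp Y \<Longrightarrow> fin_linear (F X Y)"
    and "\<And>X Y. fin_supp X \<Longrightarrow> fin_supp Y \<Longrightarrow> fin_linear (G X Y)"
    and "\<And>X c. fin_supp X \<Longrightarrow> fin_linear (\<lambda>Y. F X Y (ind c))"
    and "\<And>X c. fin_supp X \<Longrightarrow> fin_linear (\<lambda>Y. G X Y (ind c))"
    and "\<And>b c. fin_linear (\<lambda>X. F X (ind b) (ind c))" "\<And>b c. fin_linear (\<lambda>X. G X (ind b) (ind c))"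
    and "\<And>a b c. F (ind a) (ind b) (ind c) = G (ind a) (ind b) (ind c)"
    and "fin_supp X" "fin_supp Y" "fin_supp Z"
  shows "F X Y Z = G X Y Z"
proof -
  have "F X' (ind b) (ind c) = G X' (ind b) (ind c)" if "fin_supp X'" for X' b c
    using fin_linear_eq_on_basis[OF assms(5)[of b c] assms(6)[of b c] _ that] assms(7) by blast
  then have "F X Y' (ind c) = G X Y' (ind c)" if "fin_supp Y'" for Y' c
    using fin_linear_eq_on_basis[OF assms(3)[OF assms(8)] assms(4)[OF assms(8)] _ that] assms(8)
    by blast
  then show ?thesis
    using fin_linear_eq_on_basis[OF assms(1)[OF assms(8,9)] assms(2)[OF assms(8,9)] _ assms(10)]
      assms(9) by blast
qed

lemma bilin_conv_lin_ext: "bilin p X Y = lin_ext (\<lambda>a. lin_ext (p a) Y) X"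
  by (rule ext)
    (simp add: bilin_def lin_ext_apply sum_fun_apply smult_apply sum_distrib_left mult.assoc)

lemma fin_supp_bilin [simp]:
  "(\<And>a b. fin_supp (p a b)) \<Longrightarrow> fin_supp X \<Longrightarrow> fin_supp Y \<Longrightarrow> fin_supp (bilin p X Y)"
  by (simp add: bilin_conv_lin_ext)

lemma supp_bilin_subset: "supp (bilin p X Y) \<subseteq> (\<Union>a\<in>supp X. \<Union>b\<in>supp Y. supp (p a b))"
proof -
  have "supp (bilin p X Y) \<subseteq> (\<Union>a\<in>supp X. supp (lin_ext (p a) Y))"
    unfolding bilin_conv_lin_ext by (rule supp_lin_ext_subset)
  also have "\<dots> \<subseteq> (\<Union>a\<in>supp X. \<Union>b\<in>supp Y. supp (p a b))"
    using supp_lin_ext_subset[of "p _" Y] by blast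
  finally show ?thesis .
qed

lemma bilin_ind_ind [simp]: "bilin p (ind a) (ind b) = p a b"
  by (simp add: bilin_conv_lin_ext)

lemma bilin_ind_left: "bilin p (ind a) Y = lin_ext (p a) Y"
  by (simp add: bilin_conv_lin_ext)

lemma bilin_ind_right: "fin_supp X \<Longrightarrow> bilin p X (ind b) = lin_ext (\<lambda>a. p a b) X"
  by (simp add: bilin_conv_lin_ext)

lemma bilin_add_left: "fin_supp X \<Longrightarrow> fin_supp X' \<Longrightarrow> bilin p (X + X') Y = bilin p X Y + bilin p X' Y"
  by (simp add: bilin_conv_lin_ext lin_ext_add)

lemma bilin_add_right: "fin_supp Y \<Longrightarrow> fin_supp Y' \<Longrightarrow> bilin p X (Y + Y') = bilin p X Y + bilin p X Y'"
  by (simp add: bilin_conv_lin_ext lin_ext_add lin_ext_fun_add)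

lemma bilin_diff_left: "fin_supp X \<Longrightarrow> fin_supp X' \<Longrightarrow> bilin p (X - X') Y = bilin p X Y - bilin p X' Y"
  by (simp add: bilin_conv_lin_ext lin_ext_diff)

lemma bilin_diff_right: "fin_supp Y \<Longrightarrow> fin_supp Y' \<Longrightarrow> bilin p X (Y - Y') = bilin p X Y - bilin p X Y'"
  by (simp add: bilin_conv_lin_ext lin_ext_diff lin_ext_fun_diff)

lemma bilin_smult_left: "fin_supp X \<Longrightarrow> bilin p (c \<cdot>\<^sub>s X) Y = c \<cdot>\<^sub>s bilin p X Y"
  by (simp add: bilin_conv_lin_ext lin_ext_smult)

lemma bilin_smult_right: "fin_supp Y \<Longrightarrow> bilin p X (c \<cdot>\<^sub>s Y) = c \<cdot>\<^sub>s bilin p X Y"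
  by (simp add: bilin_conv_lin_ext lin_ext_smult lin_ext_fun_smult)

lemma fin_linear_bilin_left_comp [intro!]:
  "fin_linear T \<Longrightarrow> (\<And>Z. fin_supp Z \<Longrightarrow> fin_supp (T Z)) \<Longrightarrow> fin_linear (\<lambda>Z. bilin p (T Z) Y)"
  by (simp add: fin_linear_def bilin_add_left bilin_smult_left)

lemma fin_linear_bilin_right_comp [intro!]:
  "fin_linear T \<Longrightarrow> (\<And>Z. fin_supp Z \<Longrightarrow> fin_supp (T Z)) \<Longrightarrow> fin_linear (\<lambda>Z. bilin p X (T Z))"
  by (simp add: fin_linear_def bilin_add_right bilin_smult_right)

definition free_space :: "'b set \<Rightarrow> ('b \<Rightarrow> 'k::field) set" where
  "free_space B = {f. fin_supp f \<and> supp f \<subseteq> B}"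

lemma free_space_fin_supp: "f \<in> free_space B \<Longrightarrow> fin_supp f"
  by (simp add: free_space_def)

lemma free_space_add: "f \<in> free_space B \<Longrightarrow> g \<in> free_space B \<Longrightarrow> f + g \<in> free_space B"
  unfolding free_space_def using supp_add_subset[of f g] by (simp del: in_supp_iff) blast

lemma free_space_diff: "f \<in> free_space B \<Longrightarrow> g \<in> free_space B \<Longrightarrow> f - g \<in> free_space B"
  unfolding free_space_def using supp_diff_subset[of f g] by (simp del: in_supp_iff) blast

lemma free_space_smult: "f \<in> free_space B \<Longrightarrow> c \<cdot>\<^sub>s f \<in> free_space B"
  unfolding free_space_def using supp_smult_subset[of c f] by (simp del: in_supp_iff) blast

lemma subspace_free_space: "subspace (free_space B)"
  unfolding subspace_def by (simp add: free_space_add free_space_smult) (simp add: free_space_def)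

lemma ind_in_free_space: "b \<in> B \<Longrightarrow> ind b \<in> free_space B"
  by (simp add: free_space_def)

lemma bilin_in_free_space:
  assumes "\<And>a b. a \<in> A \<Longrightarrow> b \<in> B \<Longrightarrow> supp (p a b) \<subseteq> C" "\<And>a b. fin_supp (p a b)"
    and "X \<in> free_space A" "Y \<in> free_space B"
  shows "bilin p X Y \<in> free_space C"
  using assms supp_bilin_subset[of p X Y] unfolding free_space_def by (simp del: in_supp_iff) blast

lemma klinear_on_bilin_left: "klinear_on (free_space A) (\<lambda>X. bilin p X Y)"
  by (simp add: klinear_on_def bilin_add_left bilin_smult_left free_space_fin_supp)

lemma klinear_on_bilin_right: "klinear_on (free_space B) (bilin p X)"
  by (simp add: klinear_on_def bilin_add_right bilin_smult_right free_space_fin_supp)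

lemma klinear_on_diff: "klinear_on V S \<Longrightarrow> klinear_on V T \<Longrightarrow> klinear_on V (\<lambda>X. S X - T X)"
  by (simp add: klinear_on_def smult_diff_right)

lemma pre_lie_jacobi:
  fixes N :: "'a::ab_group_add \<Rightarrow> 'a \<Rightarrow> 'a"
  assumes closed: "\<And>X Y. X \<in> V \<Longrightarrow> Y \<in> V \<Longrightarrow> N X Y \<in> V"
    and diff_left: "\<And>X X' Y. X \<in> V \<Longrightarrow> X' \<in> V \<Longrightarrow> Y \<in> V \<Longrightarrow> N (X - X') Y = N X Y - N X' Y"
    and diff_right: "\<And>X Y Y'. X \<in> V \<Longrightarrow> Y \<in> V \<Longrightarrow> Y' \<in> V \<Longrightarrow> N X (Y - Y') = N X Y - N X Y'"
    and pre_lie: "\<And>X Y Z. X \<in> V \<Longrightarrow> Y \<in> V \<Longrightarrow> Z \<in> V \<Longrightarrow>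
      N X (N Y Z) - N (N X Y) Z = N Y (N X Z) - N (N Y X) Z"
    and "X \<in> V" "Y \<in> V" "Z \<in> V"
  shows "(N X (N Y Z - N Z Y) - N (N Y Z - N Z Y) X) + (N Y (N Z X - N X Z) - N (N Z X - N X Z) Y)
    + (N Z (N X Y - N Y X) - N (N X Y - N Y X) Z) = 0"
proof -
  have "(N X (N Y Z - N Z Y) - N (N Y Z - N Z Y) X) + (N Y (N Z X - N X Z) - N (N Z X - N X Z) Y)
      + (N Z (N X Y - N Y X) - N (N X Y - N Y X) Z)
    = ((N X (N Y Z) - N (N X Y) Z) - (N Y (N X Z) - N (N Y X) Z))
      + ((N Y (N Z X) - N (N Y Z) X) - (N Z (N Y X) - N (N Z Y) X))
      + ((N Z (N X Y) - N (N Z X) Y) - (N X (N Z Y) - N (N X Z) Y))"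
    using assms(5-7) by (simp add: closed diff_left diff_right algebra_simps)
  also have "\<dots> = 0"
    using assms(5-7) by (simp add: pre_lie)
  finally show ?thesis .
qed

lemma sum_mset_conv_sum_count:
  "(\<Sum>p\<in>#y. g p) = (\<Sum>p\<in>set_mset y. of_nat (count y p) * (g p :: 'k::comm_ring_1))"
proof (induction y)
  case empty
  then show ?case by simp
next
  case (add x y)
  show ?case
  proof (cases "x \<in># y")
    case True
    have "(\<Sum>p\<in>set_mset (add_mset x y). of_nat (count (add_mset x y) p) * g p)
        = (\<Sum>p\<in>set_mset y. of_nat (count y p) * g p + (if p = x then g p else 0))"
      using True by (intro sum.cong) (auto simp: ring_distribs)
    also have "\<dots> = (\<Sum>p\<in>set_mset y. of_nat (count y p) * g p) + g x"
      using True by (simp add: sum.distrib sum.delta')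
    finally show ?thesis using add by simp
  next
    case False
    have "(\<Sum>p\<in>set_mset (add_mset x y). of_nat (count (add_mset x y) p) * g p)
        = g x + (\<Sum>p\<in>set_mset y. of_nat (count (add_mset x y) p) * g p)"
      using False by (simp add: sum.insert not_in_iff)
    also have "(\<Sum>p\<in>set_mset y. of_nat (count (add_mset x y) p) * g p)
        = (\<Sum>p\<in>set_mset y. of_nat (count y p) * g p)"
      using False by (intro sum.cong) auto
    finally show ?thesis using add by simp
  qed
qed

lemma sum_count_smult_eq_sum_mset:
  "(\<Sum>p\<in>set_mset y. of_nat (count y p) \<cdot>\<^sub>s f p) = (\<Sum>p\<in>#y. f p :: _ \<Rightarrow> 'k::comm_ring_1)"
  by (rule ext)
    (simp add: sum_fun_apply sum_mset_fun_apply smult_apply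
      sum_mset_conv_sum_count[where g = "\<lambda>p. f p _"])

lemma sum_mset_cong: "(\<And>x. x \<in># M \<Longrightarrow> f x = g x) \<Longrightarrow> (\<Sum>x\<in>#M. f x) = (\<Sum>x\<in>#M. g x)"
  by (metis image_mset_cong)

lemma sum_mset_swap_nested:
  "(\<Sum>i\<in>#A. \<Sum>j\<in>#f i. \<Sum>k\<in>#B. h i j k)
    = (\<Sum>k\<in>#B. \<Sum>i\<in>#A. \<Sum>j\<in>#f i. (h i j k :: 'a::comm_monoid_add))"
proof -
  have "(\<Sum>i\<in>#A. \<Sum>j\<in>#f i. \<Sum>k\<in>#B. h i j k) = (\<Sum>i\<in>#A. \<Sum>k\<in>#B. \<Sum>j\<in>#f i. h i j k)"
    by (rule sum_mset_cong) (rule sum_mset.swap[of "\<lambda>j k. h _ j k" B])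
  also have "\<dots> = (\<Sum>k\<in>#B. \<Sum>i\<in>#A. \<Sum>j\<in>#f i. h i j k)"
    by (rule sum_mset.swap[of "\<lambda>i k. \<Sum>j\<in>#f i. h i j k" B A])
  finally show ?thesis .
qed

lemma sum_mset_pairs_add_mset:
  "(\<Sum>p\<in>#add_mset x y. \<Sum>s\<in>#(add_mset x y - {#p#}). H (add_mset x y - {#p#} - {#s#}) p s)
    = (\<Sum>s\<in>#y. H (y - {#s#}) x s) + (\<Sum>p\<in>#y. H (y - {#p#}) p x)
      + (\<Sum>p\<in>#y. \<Sum>s\<in>#(y - {#p#}). (H (add_mset x (y - {#p#} - {#s#})) p s :: 'a::comm_monoid_add))"
proof -
  have "(\<Sum>s\<in>#(add_mset x y - {#p#}). H (add_mset x y - {#p#} - {#s#}) p s)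
      = H (y - {#p#}) p x + (\<Sum>s\<in>#(y - {#p#}). H (add_mset x (y - {#p#} - {#s#})) p s)"
    if "p \<in># y" for p
  proof -
    have "(\<Sum>s\<in>#(add_mset x y - {#p#}). H (add_mset x y - {#p#} - {#s#}) p s)
        = (\<Sum>s\<in>#add_mset x (y - {#p#}). H (add_mset x (y - {#p#}) - {#s#}) p s)"
      using that by simp
    also have "\<dots> = H (y - {#p#}) p x + (\<Sum>s\<in>#(y - {#p#}). H (add_mset x (y - {#p#}) - {#s#}) p s)"
      by simp
    also have "(\<Sum>s\<in>#(y - {#p#}). H (add_mset x (y - {#p#}) - {#s#}) p s)
        = (\<Sum>s\<in>#(y - {#p#}). H (add_mset x (y - {#p#} - {#s#})) p s)"
      by (rule sum_mset_cong) simp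
    finally show ?thesis .
  qed
  then have "(\<Sum>p\<in>#y. \<Sum>s\<in>#(add_mset x y - {#p#}). H (add_mset x y - {#p#} - {#s#}) p s)
      = (\<Sum>p\<in>#y. H (y - {#p#}) p x + (\<Sum>s\<in>#(y - {#p#}). H (add_mset x (y - {#p#} - {#s#})) p s))"
    by (rule sum_mset_cong)
  then show ?thesis by (simp add: sum_mset.distrib add_ac)
qed

lemma sum_mset_pairs_swap:
  "(\<Sum>p\<in>#y. \<Sum>s\<in>#(y - {#p#}). G (y - {#p#} - {#s#}) p s)
    = (\<Sum>p\<in>#y. \<Sum>s\<in>#(y - {#p#}). (G (y - {#p#} - {#s#}) s p :: 'a::comm_monoid_add))"
proof (induction y arbitrary: G)
  case empty
  then show ?case by simp
next
  case (add x y)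
  have "(\<Sum>p\<in>#add_mset x y. \<Sum>s\<in>#(add_mset x y - {#p#}). G (add_mset x y - {#p#} - {#s#}) p s)
      = (\<Sum>s\<in>#y. G (y - {#s#}) x s) + (\<Sum>p\<in>#y. G (y - {#p#}) p x)
        + (\<Sum>p\<in>#y. \<Sum>s\<in>#(y - {#p#}). G (add_mset x (y - {#p#} - {#s#})) p s)"
    by (rule sum_mset_pairs_add_mset)
  also have "(\<Sum>p\<in>#y. \<Sum>s\<in>#(y - {#p#}). G (add_mset x (y - {#p#} - {#s#})) p s)
      = (\<Sum>p\<in>#y. \<Sum>s\<in>#(y - {#p#}). G (add_mset x (y - {#p#} - {#s#})) s p)"
    by (rule add.IH)
  also have "(\<Sum>s\<in>#y. G (y - {#s#}) x s) + (\<Sum>p\<in>#y. G (y - {#p#}) p x)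
      = (\<Sum>s\<in>#y. G (y - {#s#}) s x) + (\<Sum>p\<in>#y. G (y - {#p#}) x p)"
    by (rule add.commute)
  also have "\<dots> + (\<Sum>p\<in>#y. \<Sum>s\<in>#(y - {#p#}). G (add_mset x (y - {#p#} - {#s#})) s p)
      = (\<Sum>p\<in>#add_mset x y. \<Sum>s\<in>#(add_mset x y - {#p#}). G (add_mset x y - {#p#} - {#s#}) s p)"
    by (rule sum_mset_pairs_add_mset[where H = "\<lambda>m p s. G m s p", symmetric])
  finally show ?case .
qed

lemma union_diff_single_left: "w \<in># A \<Longrightarrow> A + B - {#w#} = (A - {#w#}) + B"
  by (metis add.commute diff_union_single_conv)

section \<open>The pre-Lie identity on basis elements\<close>

(* Stop simp from merging y1 + (y - {#p#}) into y1 + y - {#p#}: the sums below are matched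
   syntactically in the shape produced by the definitions. *)
declare subset_mset.add_diff_assoc [simp del] subset_mset.add_diff_assoc2 [simp del]
  diff_diff_add_mset [simp del]

(* (y1 \<odot> x^k1) \<rhd> (y \<odot> x^k) = y1 \<odot> (x^k1 \<rhd> y) \<odot> x^k + y1 \<odot> y \<odot> (x^k1 \<rhd> x^k):
   the derivation x^k1 \<partial> hits either a monomial p of the multiaroma y or the monomial x^k. *)
definition tri_aromas ::
  "'c mon multiset \<Rightarrow> 'c mon \<Rightarrow> 'c mon multiset \<Rightarrow> 'c mon \<Rightarrow> ('c mon multiset \<times> 'c mon \<Rightarrow> 'k::field)"
  where "tri_aromas y1 k1 y k = (\<Sum>p\<in>#y. \<Sum>v\<in>#p. ind (add_mset (dterm k1 p v) (y1 + (y - {#p#})), k))"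

definition tri_mon ::
  "'c mon multiset \<Rightarrow> 'c mon \<Rightarrow> 'c mon multiset \<Rightarrow> 'c mon \<Rightarrow> ('c mon multiset \<times> 'c mon \<Rightarrow> 'k::field)"
  where "tri_mon y1 k1 y k = (\<Sum>v\<in>#k. ind (y1 + y, dterm k1 k v))"

lemma tri_basis_split: "tri_basis (y1, k1) (y, k) = tri_aromas y1 k1 y k + tri_mon y1 k1 y k"
  by (simp add: tri_basis_def sum_count_smult_eq_sum_mset tri_aromas_def tri_mon_def)

lemma dterm_conv_add_mset: "dterm k p v = add_mset (shift v) (k + (p - {#v#}))"
  by (simp add: dterm_def)

(* The terms of x^k1 \<partial> (x^k2 \<partial>\<^sub>v p) in which \<partial> does not hit x^k2: x^k1 x^k2 \<partial>\<^sub>v \<partial>\<^sub>w p for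
   another occurrence w of a variable of p, and x^k1 x^k2 \<partial>\<^sub>v\<^sub>v p. *)
definition ddterm :: "'c mon \<Rightarrow> 'c mon \<Rightarrow> 'c mon \<Rightarrow> 'c \<times> int \<Rightarrow> 'c \<times> int \<Rightarrow> 'c mon" where
  "ddterm k1 k2 p v w = add_mset (shift v) (add_mset (shift w) (k1 + k2 + (p - {#v#} - {#w#})))"

definition ddterm_diag :: "'c mon \<Rightarrow> 'c mon \<Rightarrow> 'c mon \<Rightarrow> 'c \<times> int \<Rightarrow> 'c mon" where
  "ddterm_diag k1 k2 p v = add_mset (shift (shift v)) (k1 + k2 + (p - {#v#}))"

lemma ddterm_commute: "ddterm k1 k2 = ddterm k2 k1"
  by (simp add: ddterm_def fun_eq_iff add.commute)

lemma ddterm_diag_commute: "ddterm_diag k1 k2 = ddterm_diag k2 k1"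
  by (simp add: ddterm_diag_def fun_eq_iff add.commute)

lemma tri_aromas_add_mset: "(tri_aromas y1 k1 (add_mset q A) k :: _ \<Rightarrow> 'k::field) =
   (\<Sum>w\<in>#q. ind (add_mset (dterm k1 q w) (y1 + A), k)) + tri_aromas (add_mset q y1) k1 A k"
proof -
  have "(\<Sum>p\<in>#A. \<Sum>v\<in>#p. ind (add_mset (dterm k1 p v) (y1 + (add_mset q A - {#p#})), k))
      = (\<Sum>p\<in>#A. \<Sum>v\<in>#p. ind (add_mset (dterm k1 p v) (add_mset q y1 + (A - {#p#})), k) :: _ \<Rightarrow> 'k)"
    by (rule sum_mset_cong) simp
  then show ?thesis by (simp add: tri_aromas_def)
qed

lemma tri_aromas_plus:
  "(tri_aromas y1 k1 (A + B) k :: _ \<Rightarrow> 'k::field)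
    = tri_aromas (y1 + B) k1 A k + tri_aromas (y1 + A) k1 B k"
proof -
  have "(\<Sum>p\<in>#A. \<Sum>v\<in>#p. ind (add_mset (dterm k1 p v) (y1 + (A + B - {#p#})), k))
      = (tri_aromas (y1 + B) k1 A k :: _ \<Rightarrow> 'k)"
    unfolding tri_aromas_def by (rule sum_mset_cong) (simp add: union_diff_single_left add_ac)
  moreover have "(\<Sum>p\<in>#B. \<Sum>v\<in>#p. ind (add_mset (dterm k1 p v) (y1 + (A + B - {#p#})), k))
      = (tri_aromas (y1 + A) k1 B k :: _ \<Rightarrow> 'k)"
    unfolding tri_aromas_def by (rule sum_mset_cong) (simp add: diff_union_single_conv add_ac)
  ultimately show ?thesis by (simp add: tri_aromas_def)
qed

lemma sum_dterm_dterm: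
  "(\<Sum>w\<in>#dterm k2 p v. F (dterm k1 (dterm k2 p v) w))
    = (\<Sum>w\<in>#k2. F (dterm (dterm k1 k2 w) p v))
      + (\<Sum>w\<in>#(p - {#v#}). F (ddterm k1 k2 p v w))
      + (F (ddterm_diag k1 k2 p v) :: 'a::comm_monoid_add)"
proof -
  note expand = dterm_conv_add_mset ddterm_def union_diff_single_left diff_union_single_conv
    add_ac add_mset_commute
  have "(\<Sum>w\<in>#k2. F (dterm k1 (dterm k2 p v) w)) = (\<Sum>w\<in>#k2. F (dterm (dterm k1 k2 w) p v))"
    by (rule sum_mset_cong) (simp add: expand)
  moreover have "(\<Sum>w\<in>#(p - {#v#}). F (dterm k1 (dterm k2 p v) w))
      = (\<Sum>w\<in>#(p - {#v#}). F (ddterm k1 k2 p v w))"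
    by (rule sum_mset_cong) (simp add: expand)
  moreover have "F (dterm k1 (dterm k2 p v) (shift v)) = F (ddterm_diag k1 k2 p v)"
    by (simp add: dterm_conv_add_mset ddterm_diag_def add_ac)
  ultimately show ?thesis
    unfolding dterm_conv_add_mset[of k2 p v] by (simp add: add_ac)
qed

lemma fin_supp_tri_aromas [simp]: "fin_supp (tri_aromas y1 k1 y k)"
  by (simp add: tri_aromas_def)

lemma fin_supp_tri_mon [simp]: "fin_supp (tri_mon y1 k1 y k)"
  by (simp add: tri_mon_def)

lemma fin_supp_tri_basis [simp]: "fin_supp (tri_basis a b)"
  by (cases a; cases b) (simp add: tri_basis_split)

lemma lin_ext_tri_aromas:
  "lin_ext f (tri_aromas y1 k1 y k)
    = (\<Sum>p\<in>#y. \<Sum>v\<in>#p. f (add_mset (dterm k1 p v) (y1 + (y - {#p#})), k))"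
  by (simp add: tri_aromas_def lin_ext_sum_mset)

lemma lin_ext_tri_mon: "lin_ext f (tri_mon y1 k1 y k) = (\<Sum>v\<in>#k. f (y1 + y, dterm k1 k v))"
  by (simp add: tri_mon_def lin_ext_sum_mset)

lemma lin_ext_tri_basis:
  "lin_ext f (tri_basis (y1, k1) (y, k))
    = (\<Sum>p\<in>#y. \<Sum>v\<in>#p. f (add_mset (dterm k1 p v) (y1 + (y - {#p#})), k))
      + (\<Sum>v\<in>#k. f (y1 + y, dterm k1 k v))"
  by (simp add: tri_basis_split lin_ext_add lin_ext_tri_aromas lin_ext_tri_mon)

lemma sum_tri_aromas_exchange:
  "(\<Sum>p\<in>#y3. \<Sum>v\<in>#p. tri_aromas (add_mset (dterm k2 p v) (y1 + (y3 - {#p#}))) k1 y2 k3)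
    = (\<Sum>s\<in>#y2. \<Sum>w\<in>#s. tri_aromas (add_mset (dterm k1 s w) (y1 + (y2 - {#s#}))) k2 y3 k3
        :: _ \<Rightarrow> 'k::field)"
proof -
  let ?t = "\<lambda>p v s w. ind (add_mset (dterm k1 s w) (add_mset (dterm k2 p v) (y1 + (y3 - {#p#}))
    + (y2 - {#s#})), k3) :: _ \<Rightarrow> 'k"
  have "(\<Sum>p\<in>#y3. \<Sum>v\<in>#p. tri_aromas (add_mset (dterm k2 p v) (y1 + (y3 - {#p#}))) k1 y2 k3)
      = (\<Sum>p\<in>#y3. \<Sum>v\<in>#p. \<Sum>s\<in>#y2. \<Sum>w\<in>#s. ?t p v s w)"
    by (simp add: tri_aromas_def)
  also have "\<dots> = (\<Sum>s\<in>#y2. \<Sum>p\<in>#y3. \<Sum>v\<in>#p. \<Sum>w\<in>#s. ?t p v s w)"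
    by (rule sum_mset_swap_nested)
  also have "\<dots> = (\<Sum>s\<in>#y2. \<Sum>w\<in>#s. \<Sum>p\<in>#y3. \<Sum>v\<in>#p. ?t p v s w)"
    by (rule sum_mset_cong) (rule sum_mset_swap_nested)
  also have "\<dots> = (\<Sum>s\<in>#y2. \<Sum>w\<in>#s. tri_aromas (add_mset (dterm k1 s w) (y1 + (y2 - {#s#}))) k2 y3 k3)"
    by (simp add: tri_aromas_def add_ac add_mset_commute)
  finally show ?thesis .
qed

lemma sum_tri_aromas_mon_exchange:
  "(\<Sum>v\<in>#k3. tri_aromas (y1 + y3) k1 y2 (dterm k2 k3 v))
    = (\<Sum>s\<in>#y2. \<Sum>w\<in>#s. tri_mon (add_mset (dterm k1 s w) (y1 + (y2 - {#s#}))) k2 y3 k3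
        :: _ \<Rightarrow> 'k::field)"
proof -
  let ?t = "\<lambda>s w v. ind (add_mset (dterm k1 s w) (y1 + (y2 - {#s#})) + y3, dterm k2 k3 v) :: _ \<Rightarrow> 'k"
  have "(\<Sum>s\<in>#y2. \<Sum>w\<in>#s. tri_mon (add_mset (dterm k1 s w) (y1 + (y2 - {#s#}))) k2 y3 k3)
      = (\<Sum>s\<in>#y2. \<Sum>w\<in>#s. \<Sum>v\<in>#k3. ?t s w v)"
    by (simp add: tri_mon_def)
  also have "\<dots> = (\<Sum>v\<in>#k3. \<Sum>s\<in>#y2. \<Sum>w\<in>#s. ?t s w v)"
    by (rule sum_mset_swap_nested)
  also have "\<dots> = (\<Sum>v\<in>#k3. tri_aromas (y1 + y3) k1 y2 (dterm k2 k3 v))"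
    by (simp add: tri_aromas_def add_ac)
  finally show ?thesis by simp
qed

lemma sum_tri_aromas_dterm:
  "(\<Sum>p\<in>#y3. \<Sum>v\<in>#p. \<Sum>w\<in>#dterm k2 p v.
      ind (add_mset (dterm k1 (dterm k2 p v) w) (y1 + (y2 + (y3 - {#p#}))), k3))
    = (\<Sum>w\<in>#k2. tri_aromas (y1 + y2) (dterm k1 k2 w) y3 k3)
      + (\<Sum>p\<in>#y3. \<Sum>v\<in>#p. \<Sum>w\<in>#(p - {#v#}).
          ind (add_mset (ddterm k1 k2 p v w) (y1 + (y2 + (y3 - {#p#}))), k3))
      + (\<Sum>p\<in>#y3. \<Sum>v\<in>#p.
          ind (add_mset (ddterm_diag k1 k2 p v) (y1 + (y2 + (y3 - {#p#}))), k3) :: _ \<Rightarrow> 'k::field)"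
proof -
  let ?Y = "\<lambda>p. y1 + (y2 + (y3 - {#p#}))"
  have "(\<Sum>p\<in>#y3. \<Sum>v\<in>#p. \<Sum>w\<in>#dterm k2 p v. ind (add_mset (dterm k1 (dterm k2 p v) w) (?Y p), k3))
      = (\<Sum>p\<in>#y3. \<Sum>v\<in>#p. (\<Sum>w\<in>#k2. ind (add_mset (dterm (dterm k1 k2 w) p v) (?Y p), k3))
          + (\<Sum>w\<in>#(p - {#v#}). ind (add_mset (ddterm k1 k2 p v w) (?Y p), k3))
          + ind (add_mset (ddterm_diag k1 k2 p v) (?Y p), k3) :: _ \<Rightarrow> 'k)"
    by (intro sum_mset_cong) (rule sum_dterm_dterm)
  also have "\<dots> = (\<Sum>p\<in>#y3. \<Sum>v\<in>#p. \<Sum>w\<in>#k2. ind (add_mset (dterm (dterm k1 k2 w) p v) (?Y p), k3))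
      + (\<Sum>p\<in>#y3. \<Sum>v\<in>#p. \<Sum>w\<in>#(p - {#v#}). ind (add_mset (ddterm k1 k2 p v w) (?Y p), k3))
      + (\<Sum>p\<in>#y3. \<Sum>v\<in>#p. ind (add_mset (ddterm_diag k1 k2 p v) (?Y p), k3))"
    by (simp add: sum_mset.distrib)
  also have "(\<Sum>p\<in>#y3. \<Sum>v\<in>#p. \<Sum>w\<in>#k2. ind (add_mset (dterm (dterm k1 k2 w) p v) (?Y p), k3))
      = (\<Sum>w\<in>#k2. \<Sum>p\<in>#y3. \<Sum>v\<in>#p. ind (add_mset (dterm (dterm k1 k2 w) p v) (?Y p), k3) :: _ \<Rightarrow> 'k)"
    by (rule sum_mset_swap_nested)
  also have "\<dots> = (\<Sum>w\<in>#k2. tri_aromas (y1 + y2) (dterm k1 k2 w) y3 k3)"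
    by (simp add: tri_aromas_def add_ac)
  finally show ?thesis .
qed

lemma sum_tri_mon_dterm: "(\<Sum>v\<in>#k3. tri_mon y1 k1 (y2 + y3) (dterm k2 k3 v))
  = (\<Sum>w\<in>#k2. tri_mon (y1 + y2) (dterm k1 k2 w) y3 k3)
  + (\<Sum>v\<in>#k3. \<Sum>w\<in>#(k3 - {#v#}). ind (y1 + (y2 + y3), ddterm k1 k2 k3 v w))
  + (\<Sum>v\<in>#k3. ind (y1 + (y2 + y3), ddterm_diag k1 k2 k3 v) :: _ \<Rightarrow> 'k::field)"
proof -
  have "(\<Sum>v\<in>#k3. tri_mon y1 k1 (y2 + y3) (dterm k2 k3 v) :: _ \<Rightarrow> 'k)
     = (\<Sum>v\<in>#k3. \<Sum>w\<in>#dterm k2 k3 v. ind (y1 + (y2 + y3), dterm k1 (dterm k2 k3 v) w))"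
    by (simp add: tri_mon_def)
  also have "\<dots> = (\<Sum>v\<in>#k3. (\<Sum>w\<in>#k2. ind (y1 + (y2 + y3), dterm (dterm k1 k2 w) k3 v))
     + (\<Sum>w\<in>#(k3 - {#v#}). ind (y1 + (y2 + y3), ddterm k1 k2 k3 v w))
     + ind (y1 + (y2 + y3), ddterm_diag k1 k2 k3 v))"
    by (intro sum_mset_cong) (rule sum_dterm_dterm)
  also have "\<dots> = (\<Sum>v\<in>#k3. \<Sum>w\<in>#k2. ind (y1 + (y2 + y3), dterm (dterm k1 k2 w) k3 v))
     + (\<Sum>v\<in>#k3. \<Sum>w\<in>#(k3 - {#v#}). ind (y1 + (y2 + y3), ddterm k1 k2 k3 v w))
     + (\<Sum>v\<in>#k3. ind (y1 + (y2 + y3), ddterm_diag k1 k2 k3 v))"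
    by (simp add: sum_mset.distrib)
  also have "(\<Sum>v\<in>#k3. \<Sum>w\<in>#k2. ind (y1 + (y2 + y3), dterm (dterm k1 k2 w) k3 v))
     = (\<Sum>w\<in>#k2. \<Sum>v\<in>#k3. ind (y1 + (y2 + y3), dterm (dterm k1 k2 w) k3 v) :: _ \<Rightarrow> 'k)"
    by (rule sum_mset.swap)
  also have "\<dots> = (\<Sum>w\<in>#k2. tri_mon (y1 + y2) (dterm k1 k2 w) y3 k3)"
    by (simp add: tri_mon_def add_ac)
  finally show ?thesis .
qed

(* The associator of three basis elements, written as the terms in which x^k1 \<partial> and x^k2 \<partial> both
   hit the third factor: two monomials of y3 (first sum), a monomial of y3 and x^k3 (second and
   third sums), or a single monomial (last four sums).  Each kind is symmetric in the first two
   factors, which is the pre-Lie identity. *)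
definition associator_basis ::
  "'c mon multiset \<Rightarrow> 'c mon \<Rightarrow> 'c mon multiset \<Rightarrow> 'c mon \<Rightarrow> 'c mon multiset \<Rightarrow> 'c mon
    \<Rightarrow> ('c mon multiset \<times> 'c mon \<Rightarrow> 'k::field)" where
  "associator_basis y1 k1 y2 k2 y3 k3 =
     (\<Sum>p\<in>#y3. \<Sum>v\<in>#p. tri_aromas (add_mset (dterm k2 p v) (y1 + y2)) k1 (y3 - {#p#}) k3)
   + (\<Sum>p\<in>#y3. \<Sum>v\<in>#p. tri_mon y1 k1 (add_mset (dterm k2 p v) (y2 + (y3 - {#p#}))) k3)
   + (\<Sum>v\<in>#k3. tri_aromas (y1 + y2) k1 y3 (dterm k2 k3 v))
   + (\<Sum>p\<in>#y3. \<Sum>v\<in>#p. \<Sum>w\<in>#(p - {#v#}).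
        ind (add_mset (ddterm k1 k2 p v w) (y1 + (y2 + (y3 - {#p#}))), k3))
   + (\<Sum>p\<in>#y3. \<Sum>v\<in>#p. ind (add_mset (ddterm_diag k1 k2 p v) (y1 + (y2 + (y3 - {#p#}))), k3))
   + (\<Sum>v\<in>#k3. \<Sum>w\<in>#(k3 - {#v#}). ind (y1 + (y2 + y3), ddterm k1 k2 k3 v w))
   + (\<Sum>v\<in>#k3. ind (y1 + (y2 + y3), ddterm_diag k1 k2 k3 v))"

lemma tri_basis_associator:
  "lin_ext (tri_basis (y1, k1)) (tri_basis (y2, k2) (y3, k3))
    = lin_ext (\<lambda>a. tri_basis a (y3, k3)) (tri_basis (y1, k1) (y2, k2))
      + (associator_basis y1 k1 y2 k2 y3 k3 :: _ \<Rightarrow> 'k::field)"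
  by (simp only: lin_ext_tri_basis)
    (simp add: tri_basis_split tri_aromas_add_mset tri_aromas_plus sum_mset.distrib
      sum_tri_aromas_exchange sum_tri_aromas_mon_exchange sum_tri_aromas_dterm sum_tri_mon_dterm
      associator_basis_def add_ac)

lemma sum_tri_aromas_pairs_swap:
  "(\<Sum>p\<in>#y3. \<Sum>v\<in>#p. tri_aromas (add_mset (dterm kB p v) (yA + yB)) kA (y3 - {#p#}) k3)
    = (\<Sum>p\<in>#y3. \<Sum>v\<in>#p. tri_aromas (add_mset (dterm kA p v) (yB + yA)) kB (y3 - {#p#}) k3
        :: _ \<Rightarrow> 'k::field)"
proof -
  let ?t = "\<lambda>ka kb ya yb p s v w m. ind (add_mset (dterm ka s w) (add_mset (dterm kb p v) (ya + yb)
    + m), k3) :: _ \<Rightarrow> 'k"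
  have expand: "(\<Sum>p\<in>#y3. \<Sum>v\<in>#p. tri_aromas (add_mset (dterm kb p v) (ya + yb)) ka (y3 - {#p#}) k3)
      = (\<Sum>p\<in>#y3. \<Sum>s\<in>#(y3 - {#p#}). \<Sum>v\<in>#p. \<Sum>w\<in>#s. ?t ka kb ya yb p s v w (y3 - {#p#} - {#s#}))"
    for ya ka yb kb
    by (simp add: tri_aromas_def) (rule sum_mset_cong, rule sum_mset.swap)
  have "(\<Sum>p\<in>#y3. \<Sum>s\<in>#(y3 - {#p#}). \<Sum>v\<in>#p. \<Sum>w\<in>#s. ?t kA kB yA yB p s v w (y3 - {#p#} - {#s#}))
      = (\<Sum>p\<in>#y3. \<Sum>s\<in>#(y3 - {#p#}). \<Sum>v\<in>#s. \<Sum>w\<in>#p. ?t kA kB yA yB s p v w (y3 - {#p#} - {#s#}))"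
    using sum_mset_pairs_swap[of "\<lambda>m p s. \<Sum>v\<in>#p. \<Sum>w\<in>#s. ?t kA kB yA yB p s v w m" y3] by simp
  also have "\<dots> = (\<Sum>p\<in>#y3. \<Sum>s\<in>#(y3 - {#p#}). \<Sum>w\<in>#p. \<Sum>v\<in>#s.
      ?t kA kB yA yB s p v w (y3 - {#p#} - {#s#}))"
    by (intro sum_mset_cong) (rule sum_mset.swap)
  also have "\<dots> = (\<Sum>p\<in>#y3. \<Sum>s\<in>#(y3 - {#p#}). \<Sum>v\<in>#p. \<Sum>w\<in>#s.
      ?t kB kA yB yA p s v w (y3 - {#p#} - {#s#}))"
    by (simp add: add_ac add_mset_commute)
  finally show ?thesis by (simp only: expand)
qed

lemma sum_tri_mon_aromas_exchange:
  "(\<Sum>p\<in>#y3. \<Sum>v\<in>#p. tri_mon yA kA (add_mset (dterm kB p v) (yB + (y3 - {#p#}))) k3)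
    = (\<Sum>v\<in>#k3. tri_aromas (yB + yA) kB y3 (dterm kA k3 v) :: _ \<Rightarrow> 'k::field)"
proof -
  let ?t = "\<lambda>p v w. ind (yA + add_mset (dterm kB p v) (yB + (y3 - {#p#})), dterm kA k3 w) :: _ \<Rightarrow> 'k"
  have "(\<Sum>p\<in>#y3. \<Sum>v\<in>#p. tri_mon yA kA (add_mset (dterm kB p v) (yB + (y3 - {#p#}))) k3)
      = (\<Sum>p\<in>#y3. \<Sum>v\<in>#p. \<Sum>w\<in>#k3. ?t p v w)"
    by (simp add: tri_mon_def)
  also have "\<dots> = (\<Sum>w\<in>#k3. \<Sum>p\<in>#y3. \<Sum>v\<in>#p. ?t p v w)"
    by (rule sum_mset_swap_nested)
  also have "\<dots> = (\<Sum>v\<in>#k3. tri_aromas (yB + yA) kB y3 (dterm kA k3 v))"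
    by (simp add: tri_aromas_def add_ac)
  finally show ?thesis .
qed

lemma associator_basis_swap:
  "associator_basis y1 k1 y2 k2 y3 k3 = associator_basis y2 k2 y1 k1 y3 k3"
  unfolding associator_basis_def
    sum_tri_aromas_pairs_swap[where yA = y1 and kA = k1 and yB = y2 and kB = k2]
    sum_tri_mon_aromas_exchange[where yA = y1 and kA = k1 and yB = y2 and kB = k2]
    sum_tri_mon_aromas_exchange[where yA = y2 and kA = k2 and yB = y1 and kB = k1]
  by (simp add: ddterm_commute[of k1] ddterm_diag_commute[of k1] add_ac)

lemma tri_basis_pre_lie:
  "lin_ext (tri_basis a) (tri_basis b c) - lin_ext (\<lambda>x. tri_basis x c) (tri_basis a b)
    = lin_ext (tri_basis b) (tri_basis a c)
      - lin_ext (\<lambda>x. tri_basis x c) (tri_basis b a :: _ \<Rightarrow> 'k::field)"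
  by (cases a; cases b; cases c) (simp add: tri_basis_associator associator_basis_swap)

section \<open>The action of multiaromas and the anchor\<close>

definition aroma_mult :: "'c mon multiset \<Rightarrow> 'c mon multiset \<Rightarrow> ('c mon multiset \<Rightarrow> 'k::field)" where
  "aroma_mult y y' = ind (y + y')"

definition aroma_smult ::
  "'c mon multiset \<Rightarrow> 'c mon multiset \<times> 'c mon \<Rightarrow> ('c mon multiset \<times> 'c mon \<Rightarrow> 'k::field)"
  where "aroma_smult y b = ind (y + fst b, snd b)"

definition anchor_basis ::
  "'c mon multiset \<times> 'c mon \<Rightarrow> 'c mon multiset \<Rightarrow> ('c mon multiset \<Rightarrow> 'k::field)"
  where "anchor_basis b y = tri_aroma (fst b) (snd b) y"

lemma R_mult_conv_bilin: "R_mult = bilin aroma_mult"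
  by (simp add: R_mult_def aroma_mult_def[abs_def])

lemma L_smul_conv_bilin: "L_smul = bilin aroma_smult"
  by (simp add: L_smul_def aroma_smult_def[abs_def] case_prod_beta')

lemma L_rho_conv_bilin: "L_rho = bilin anchor_basis"
  by (simp add: L_rho_def anchor_basis_def[abs_def] case_prod_beta')

lemma tri_aroma_conv_sum_mset:
  "tri_aroma y1 k y = (\<Sum>p\<in>#y. \<Sum>v\<in>#p. ind (add_mset (dterm k p v) (y1 + (y - {#p#}))))"
  by (simp add: tri_aroma_def sum_count_smult_eq_sum_mset)

lemma fin_supp_aroma_mult [simp]: "fin_supp (aroma_mult y y')"
  by (simp add: aroma_mult_def)

lemma fin_supp_aroma_smult [simp]: "fin_supp (aroma_smult y b)"
  by (simp add: aroma_smult_def)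

lemma fin_supp_tri_aroma [simp]: "fin_supp (tri_aroma y1 k y)"
  by (simp add: tri_aroma_conv_sum_mset)

lemma fin_supp_anchor_basis [simp]: "fin_supp (anchor_basis b y)"
  by (simp add: anchor_basis_def)

lemma fin_supp_R_mult [simp]: "fin_supp f \<Longrightarrow> fin_supp g \<Longrightarrow> fin_supp (R_mult f g)"
  by (simp add: R_mult_conv_bilin)

lemma fin_supp_L_smul [simp]: "fin_supp f \<Longrightarrow> fin_supp X \<Longrightarrow> fin_supp (L_smul f X)"
  by (simp add: L_smul_conv_bilin)

lemma fin_supp_L_rho [simp]: "fin_supp X \<Longrightarrow> fin_supp f \<Longrightarrow> fin_supp (L_rho X f)"
  by (simp add: L_rho_conv_bilin)

lemma fin_supp_L_nabla [simp]: "fin_supp X \<Longrightarrow> fin_supp Y \<Longrightarrow> fin_supp (L_nabla X Y)"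
  by (simp add: L_nabla_def)

lemma tri_basis_aroma_leibniz:
  "tri_basis (y1, k1) (y + y2, k2)
    = lin_ext (\<lambda>a. aroma_smult a (y2, k2)) (tri_aroma y1 k1 y)
      + lin_ext (aroma_smult y) (tri_basis (y1, k1) (y2, k2))"
  by (simp add: tri_basis_split tri_aroma_conv_sum_mset lin_ext_sum_mset lin_ext_add
      lin_ext_tri_aromas lin_ext_tri_mon tri_aromas_plus)
    (simp add: aroma_smult_def tri_aromas_def tri_mon_def add_ac)

lemma tri_basis_aroma_left:
  "tri_basis (y + y2, k2) b = lin_ext (aroma_smult y) (tri_basis (y2, k2) b)"
  by (cases b) (simp add: tri_basis_split lin_ext_add lin_ext_tri_aromas lin_ext_tri_mon,
      simp add: aroma_smult_def tri_aromas_def tri_mon_def add_ac)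

lemma tri_basis_aroma_embed:
  "tri_basis (y1, k1) (y, {#}) = lin_ext (\<lambda>y. ind (y, {#})) (tri_aroma y1 k1 y)"
  by (simp add: tri_basis_split tri_aroma_conv_sum_mset lin_ext_sum_mset tri_aromas_def tri_mon_def)

lemma L_nabla_L_smul_right:
  "fin_supp X \<Longrightarrow> fin_supp f \<Longrightarrow> fin_supp Y \<Longrightarrow>
    L_nabla X (L_smul f Y) = L_smul (L_rho X f) Y + L_smul f (L_nabla X Y)"
  unfolding L_nabla_def L_smul_conv_bilin L_rho_conv_bilin
  by (rule trilinear_eq_on_basis[where F = "\<lambda>X f Y. bilin tri_basis X (bilin aroma_smult f Y)"
        and G = "\<lambda>X f Y. bilin aroma_smult (bilin anchor_basis X f) Y
          + bilin aroma_smult f (bilin tri_basis X Y)"])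
    (auto simp: bilin_ind_left bilin_ind_right tri_basis_aroma_leibniz tri_basis_aroma_left
      aroma_smult_def anchor_basis_def)

lemma L_nabla_L_smul_left:
  "fin_supp X \<Longrightarrow> fin_supp f \<Longrightarrow> fin_supp Y \<Longrightarrow> L_nabla (L_smul f Y) X = L_smul f (L_nabla Y X)"
  unfolding L_nabla_def L_smul_conv_bilin
  by (rule trilinear_eq_on_basis[where F = "\<lambda>f Y X. bilin tri_basis (bilin aroma_smult f Y) X"
        and G = "\<lambda>f Y X. bilin aroma_smult f (bilin tri_basis Y X)"])
    (auto simp: bilin_ind_left bilin_ind_right tri_basis_aroma_left aroma_smult_def)

lemma L_smul_R_mult:
  "fin_supp f \<Longrightarrow> fin_supp g \<Longrightarrow> fin_supp X \<Longrightarrow> L_smul (R_mult f g) X = L_smul f (L_smul g X)"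
  unfolding L_smul_conv_bilin R_mult_conv_bilin
  by (rule trilinear_eq_on_basis[where F = "\<lambda>f g X. bilin aroma_smult (bilin aroma_mult f g) X"
        and G = "\<lambda>f g X. bilin aroma_smult f (bilin aroma_smult g X)"])
    (auto simp: bilin_ind_left bilin_ind_right aroma_smult_def aroma_mult_def add_ac)

lemma R_mult_assoc:
  "fin_supp f \<Longrightarrow> fin_supp g \<Longrightarrow> fin_supp h \<Longrightarrow> R_mult (R_mult f g) h = R_mult f (R_mult g h)"
  unfolding R_mult_conv_bilin
  by (rule trilinear_eq_on_basis[where F = "\<lambda>f g h. bilin aroma_mult (bilin aroma_mult f g) h"
        and G = "\<lambda>f g h. bilin aroma_mult f (bilin aroma_mult g h)"])
    (auto simp: bilin_ind_left bilin_ind_right aroma_mult_def add_ac)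

lemma R_mult_commute: "fin_supp f \<Longrightarrow> fin_supp g \<Longrightarrow> R_mult f g = R_mult g f"
  unfolding R_mult_conv_bilin
  by (rule bilinear_eq_on_basis[where F = "bilin aroma_mult" and G = "\<lambda>f g. bilin aroma_mult g f"])
    (auto simp: bilin_ind_left bilin_ind_right aroma_mult_def add_ac)

lemma R_mult_one_left:
  fixes f :: "'c mon multiset \<Rightarrow> 'k::field"
  assumes "fin_supp f"
  shows "R_mult R_one f = f"
proof -
  have "lin_ext (aroma_mult {#}) f = lin_ext ind f"
    by (rule lin_ext_cong) (simp add: aroma_mult_def)
  with assms show ?thesis by (simp add: R_mult_conv_bilin R_one_def bilin_ind_left lin_ext_ind_self)
qed

lemma L_smul_one_left:
  fixes X :: "'c mon multiset \<times> 'c mon \<Rightarrow> 'k::field"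
  assumes "fin_supp X"
  shows "L_smul R_one X = X"
proof -
  have "lin_ext (aroma_smult {#}) X = lin_ext ind X"
    by (rule lin_ext_cong) (simp add: aroma_smult_def)
  with assms show ?thesis by (simp add: L_smul_conv_bilin R_one_def bilin_ind_left lin_ext_ind_self)
qed

lemma L_nabla_pre_lie:
  "fin_supp X \<Longrightarrow> fin_supp Y \<Longrightarrow> fin_supp Z \<Longrightarrow>
    L_nabla X (L_nabla Y Z) - L_nabla (L_nabla X Y) Z
      = L_nabla Y (L_nabla X Z) - L_nabla (L_nabla Y X) Z"
  unfolding L_nabla_def
  by (rule trilinear_eq_on_basis[where
        F = "\<lambda>X Y Z. bilin tri_basis X (bilin tri_basis Y Z)
          - bilin tri_basis (bilin tri_basis X Y) Z"
        and G = "\<lambda>X Y Z. bilin tri_basis Y (bilin tri_basis X Z)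
          - bilin tri_basis (bilin tri_basis Y X) Z"])
    (auto simp: tri_basis_pre_lie bilin_ind_left bilin_ind_right)

lemma L_nabla_diff_left:
  "fin_supp X \<Longrightarrow> fin_supp X' \<Longrightarrow> L_nabla (X - X') Y = L_nabla X Y - L_nabla X' Y"
  by (simp add: L_nabla_def bilin_diff_left)

lemma L_nabla_diff_right:
  "fin_supp Y \<Longrightarrow> fin_supp Y' \<Longrightarrow> L_nabla X (Y - Y') = L_nabla X Y - L_nabla X Y'"
  by (simp add: L_nabla_def bilin_diff_right)

(* y \<mapsto> y \<odot> 1.  The constant monomial {#} has weight 0, so the image lies outside L_car. *)
definition aroma_embed :: "('c mon multiset \<Rightarrow> 'k::field) \<Rightarrow> ('c mon multiset \<times> 'c mon \<Rightarrow> 'k)" where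
  "aroma_embed f = lin_ext (\<lambda>y. ind (y, {#})) f"

lemma fin_supp_aroma_embed [simp]: "fin_supp f \<Longrightarrow> fin_supp (aroma_embed f)"
  by (simp add: aroma_embed_def)

lemma fin_linear_aroma_embed_comp [intro!]:
  "fin_linear T \<Longrightarrow> (\<And>Z. fin_supp Z \<Longrightarrow> fin_supp (T Z)) \<Longrightarrow> fin_linear (\<lambda>Z. aroma_embed (T Z))"
  unfolding aroma_embed_def by (rule fin_linear_lin_ext_comp)

lemma aroma_embed_apply: "fin_supp f \<Longrightarrow> aroma_embed f (y, {#}) = f y"
  by (simp add: aroma_embed_def lin_ext_apply ind_def if_distrib[of "(*) _"] sum.delta'
      cong: if_cong)

lemma aroma_embed_inject: "fin_supp f \<Longrightarrow> fin_supp g \<Longrightarrow> aroma_embed f = aroma_embed g \<Longrightarrow> f = g"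
  by (metis aroma_embed_apply ext)

lemma aroma_embed_add:
  "fin_supp f \<Longrightarrow> fin_supp g \<Longrightarrow> aroma_embed (f + g) = aroma_embed f + aroma_embed g"
  by (simp add: aroma_embed_def lin_ext_add)

lemma aroma_embed_diff:
  "fin_supp f \<Longrightarrow> fin_supp g \<Longrightarrow> aroma_embed (f - g) = aroma_embed f - aroma_embed g"
  by (simp add: aroma_embed_def lin_ext_diff)

lemma L_nabla_aroma_embed:
  "fin_supp X \<Longrightarrow> fin_supp f \<Longrightarrow> L_nabla X (aroma_embed f) = aroma_embed (L_rho X f)"
  unfolding L_nabla_def L_rho_conv_bilin
  by (rule bilinear_eq_on_basis[where F = "\<lambda>X f. bilin tri_basis X (aroma_embed f)"
        and G = "\<lambda>X f. aroma_embed (bilin anchor_basis X f)"])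
    (auto simp: bilin_ind_left bilin_ind_right anchor_basis_def aroma_embed_def
      tri_basis_aroma_embed)

lemma L_smul_aroma_embed:
  "fin_supp g \<Longrightarrow> fin_supp f \<Longrightarrow> L_smul g (aroma_embed f) = aroma_embed (R_mult g f)"
  unfolding L_smul_conv_bilin R_mult_conv_bilin
  by (rule bilinear_eq_on_basis[where F = "\<lambda>g f. bilin aroma_smult g (aroma_embed f)"
        and G = "\<lambda>g f. aroma_embed (bilin aroma_mult g f)"])
    (auto simp: bilin_ind_left bilin_ind_right aroma_smult_def aroma_mult_def aroma_embed_def)

lemma L_rho_leibniz:
  assumes "fin_supp X" "fin_supp f" "fin_supp g"
  shows "L_rho X (R_mult f g) = R_mult (L_rho X f) g + R_mult f (L_rho X g)"
proof -
  have "aroma_embed (L_rho X (R_mult f g)) = L_nabla X (L_smul f (aroma_embed g))"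
    using assms by (simp add: L_nabla_aroma_embed L_smul_aroma_embed)
  also have "\<dots> = L_smul (L_rho X f) (aroma_embed g) + L_smul f (L_nabla X (aroma_embed g))"
    using assms by (simp add: L_nabla_L_smul_right)
  also have "\<dots> = aroma_embed (R_mult (L_rho X f) g + R_mult f (L_rho X g))"
    using assms by (simp add: L_nabla_aroma_embed L_smul_aroma_embed aroma_embed_add)
  finally show ?thesis using assms by (intro aroma_embed_inject) auto
qed

lemma L_rho_L_smul:
  assumes "fin_supp X" "fin_supp f" "fin_supp g"
  shows "L_rho (L_smul g X) f = R_mult g (L_rho X f)"
proof -
  have "aroma_embed (L_rho (L_smul g X) f) = L_nabla (L_smul g X) (aroma_embed f)"
    using assms by (simp add: L_nabla_aroma_embed)
  also have "\<dots> = L_smul g (L_nabla X (aroma_embed f))"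
    using assms by (simp add: L_nabla_L_smul_left)
  also have "\<dots> = aroma_embed (R_mult g (L_rho X f))"
    using assms by (simp add: L_nabla_aroma_embed L_smul_aroma_embed)
  finally show ?thesis using assms by (intro aroma_embed_inject) auto
qed

abbreviation L_bracket ::
  "('c mon multiset \<times> 'c mon \<Rightarrow> 'k::field) \<Rightarrow> ('c mon multiset \<times> 'c mon \<Rightarrow> 'k)
    \<Rightarrow> ('c mon multiset \<times> 'c mon \<Rightarrow> 'k)"
  where "L_bracket X Y \<equiv> L_nabla X Y - L_nabla Y X"

lemma L_rho_bracket:
  assumes "fin_supp X" "fin_supp Y" "fin_supp f"
  shows "L_rho (L_bracket X Y) f = L_rho X (L_rho Y f) - L_rho Y (L_rho X f)"
proof -
  have "aroma_embed (L_rho (L_bracket X Y) f) = L_nabla (L_bracket X Y) (aroma_embed f)"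
    using assms by (simp add: L_nabla_aroma_embed)
  also have "\<dots> = L_nabla (L_nabla X Y) (aroma_embed f) - L_nabla (L_nabla Y X) (aroma_embed f)"
    using assms by (simp add: L_nabla_diff_left)
  also have "\<dots> = L_nabla X (L_nabla Y (aroma_embed f)) - L_nabla Y (L_nabla X (aroma_embed f))"
    using L_nabla_pre_lie[of X Y "aroma_embed f"] assms by (simp add: algebra_simps)
  also have "\<dots> = aroma_embed (L_rho X (L_rho Y f) - L_rho Y (L_rho X f))"
    using assms by (simp add: L_nabla_aroma_embed aroma_embed_diff)
  finally show ?thesis using assms by (intro aroma_embed_inject) auto
qed

lemma L_rho_add_left: "fin_supp X \<Longrightarrow> fin_supp Y \<Longrightarrow> L_rho (X + Y) f = L_rho X f + L_rho Y f"
  by (simp add: L_rho_conv_bilin bilin_add_left)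

lemma L_rho_smult_left: "fin_supp X \<Longrightarrow> L_rho (c \<cdot>\<^sub>s X) f = c \<cdot>\<^sub>s L_rho X f"
  by (simp add: L_rho_conv_bilin bilin_smult_left)

definition R_basis :: "'c mon multiset set" where
  "R_basis = {y. \<forall>p\<in>#y. p \<in> M0_mons}"

definition L_basis :: "('c mon multiset \<times> 'c mon) set" where
  "L_basis = {(y, k). (\<forall>p\<in>#y. p \<in> M0_mons) \<and> k \<in> Mm1_mons}"

lemma R_car_eq_free_space: "R_car = free_space R_basis"
  unfolding free_space_def R_car_def R_basis_def by blast

lemma L_car_eq_free_space: "L_car = free_space L_basis"
  unfolding free_space_def L_car_def L_basis_def by fast

lemma R_car_fin_supp: "f \<in> R_car \<Longrightarrow> fin_supp f"
  by (simp add: R_car_eq_free_space free_space_fin_supp)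

lemma L_car_fin_supp: "X \<in> L_car \<Longrightarrow> fin_supp X"
  by (simp add: L_car_eq_free_space free_space_fin_supp)

lemma wt_add_mset [simp]: "wt (add_mset v m) = snd v + wt m"
  by (simp add: wt_def)

lemma wt_union [simp]: "wt (m + m') = wt m + wt m'"
  by (simp add: wt_def)

lemma wt_remove1: "v \<in># m \<Longrightarrow> wt (m - {#v#}) = wt m - snd v"
  using wt_add_mset[of v "m - {#v#}"] insert_DiffM[of v m] by simp

lemma valid_mon_add_mset [simp]: "valid_mon (add_mset v m) \<longleftrightarrow> snd v \<ge> -1 \<and> valid_mon m"
  by (simp add: valid_mon_def)

lemma valid_mon_union [simp]: "valid_mon (m + m') \<longleftrightarrow> valid_mon m \<and> valid_mon m'"
  by (auto simp: valid_mon_def)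

lemma valid_mon_remove1: "valid_mon m \<Longrightarrow> valid_mon (m - {#v#})"
  by (auto simp: valid_mon_def dest: in_diffD)

lemma valid_mon_dterm: "valid_mon k \<Longrightarrow> valid_mon p \<Longrightarrow> v \<in># p \<Longrightarrow> valid_mon (dterm k p v)"
  by (auto simp: dterm_conv_add_mset shift_def valid_mon_remove1) (auto simp: valid_mon_def)

lemma wt_dterm: "v \<in># p \<Longrightarrow> wt (dterm k p v) = wt k + wt p + 1"
  by (simp add: dterm_conv_add_mset shift_def wt_remove1)

lemma dterm_in_M0_mons: "k \<in> Mm1_mons \<Longrightarrow> p \<in> M0_mons \<Longrightarrow> v \<in># p \<Longrightarrow> dterm k p v \<in> M0_mons"
  by (auto simp: M0_mons_def Mm1_mons_def valid_mon_dterm wt_dterm) (simp add: dterm_conv_add_mset)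

lemma dterm_in_Mm1_mons: "k \<in> Mm1_mons \<Longrightarrow> k' \<in> Mm1_mons \<Longrightarrow> v \<in># k' \<Longrightarrow> dterm k k' v \<in> Mm1_mons"
  by (auto simp: Mm1_mons_def valid_mon_dterm wt_dterm)

lemma supp_sum_mset_ind_subset:
  "supp (\<Sum>x\<in>#M. ind (f x) :: _ \<Rightarrow> 'k::comm_ring_1) \<subseteq> f ` set_mset M"
  using supp_sum_mset_subset[of "\<lambda>x. ind (f x)" M] by auto

lemma supp_sum_mset_sum_mset_ind_subset:
  "supp (\<Sum>x\<in>#M. \<Sum>y\<in>#N x. ind (f x y) :: _ \<Rightarrow> 'k::comm_ring_1) \<subseteq> {f x y | x y. x \<in># M \<and> y \<in># N x}"
proof
  fix z assume "z \<in> supp (\<Sum>x\<in>#M. \<Sum>y\<in>#N x. ind (f x y) :: _ \<Rightarrow> 'k)"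
  then obtain x where x: "x \<in># M" "z \<in> supp (\<Sum>y\<in>#N x. ind (f x y) :: _ \<Rightarrow> 'k)"
    using supp_sum_mset_subset[of "\<lambda>x. \<Sum>y\<in>#N x. ind (f x y)" M] by blast
  then obtain y where "y \<in># N x" "z = f x y"
    using supp_sum_mset_ind_subset[of "f x" "N x"] by blast
  with x show "z \<in> {f x y | x y. x \<in># M \<and> y \<in># N x}" by blast
qed

lemma supp_aroma_mult_subset: "y \<in> R_basis \<Longrightarrow> y' \<in> R_basis \<Longrightarrow> supp (aroma_mult y y') \<subseteq> R_basis"
  by (auto simp: aroma_mult_def R_basis_def)

lemma supp_aroma_smult_subset: "y \<in> R_basis \<Longrightarrow> b \<in> L_basis \<Longrightarrow> supp (aroma_smult y b) \<subseteq> L_basis"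
  by (auto simp: aroma_smult_def R_basis_def L_basis_def)

lemma supp_tri_basis_subset: "a \<in> L_basis \<Longrightarrow> b \<in> L_basis \<Longrightarrow> supp (tri_basis a b) \<subseteq> L_basis"
proof (cases a, cases b)
  fix y1 k1 y2 k2
  assume "a \<in> L_basis" "b \<in> L_basis" and ab: "a = (y1, k1)" "b = (y2, k2)"
  then have k: "k1 \<in> Mm1_mons" "k2 \<in> Mm1_mons" and y: "\<forall>p\<in>#y1 + y2. p \<in> M0_mons"
    by (auto simp: L_basis_def)
  have "supp (tri_aromas y1 k1 y2 k2)
      \<subseteq> {(add_mset (dterm k1 p v) (y1 + (y2 - {#p#})), k2) | p v. p \<in># y2 \<and> v \<in># p}"
    unfolding tri_aromas_def by (rule supp_sum_mset_sum_mset_ind_subset)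
  also have "\<dots> \<subseteq> L_basis"
    using k y by (auto simp: L_basis_def dterm_in_M0_mons) (blast dest: in_diffD)
  finally have "supp (tri_aromas y1 k1 y2 k2) \<subseteq> L_basis" .
  moreover have "supp (tri_mon y1 k1 y2 k2) \<subseteq> (\<lambda>v. (y1 + y2, dterm k1 k2 v)) ` set_mset k2"
    unfolding tri_mon_def by (rule supp_sum_mset_ind_subset)
  then have "supp (tri_mon y1 k1 y2 k2) \<subseteq> L_basis"
    using k y by (auto simp: L_basis_def dterm_in_Mm1_mons)
  ultimately show ?thesis
    unfolding ab tri_basis_split
    using supp_add_subset[of "tri_aromas y1 k1 y2 k2" "tri_mon y1 k1 y2 k2"] by blast
qed

lemma supp_anchor_basis_subset: "b \<in> L_basis \<Longrightarrow> y \<in> R_basis \<Longrightarrow> supp (anchor_basis b y) \<subseteq> R_basis"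
proof (cases b)
  fix y1 k
  assume "b \<in> L_basis" "y \<in> R_basis" and b: "b = (y1, k)"
  then have k: "k \<in> Mm1_mons" and y: "\<forall>p\<in>#y1 + y. p \<in> M0_mons"
    by (auto simp: L_basis_def R_basis_def)
  have "supp (anchor_basis b y)
      \<subseteq> {add_mset (dterm k p v) (y1 + (y - {#p#})) | p v. p \<in># y \<and> v \<in># p}"
    unfolding b anchor_basis_def tri_aroma_conv_sum_mset fst_conv snd_conv
    by (rule supp_sum_mset_sum_mset_ind_subset)
  also have "\<dots> \<subseteq> R_basis"
    using k y by (auto simp: R_basis_def dterm_in_M0_mons) (blast dest: in_diffD)
  finally show ?thesis .
qed

lemma R_mult_in_R_car: "f \<in> R_car \<Longrightarrow> g \<in> R_car \<Longrightarrow> R_mult f g \<in> R_car"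
  unfolding R_mult_conv_bilin R_car_eq_free_space
  by (rule bilin_in_free_space[OF supp_aroma_mult_subset]) auto

lemma L_smul_in_L_car: "f \<in> R_car \<Longrightarrow> X \<in> L_car \<Longrightarrow> L_smul f X \<in> L_car"
  unfolding L_smul_conv_bilin R_car_eq_free_space L_car_eq_free_space
  by (rule bilin_in_free_space[OF supp_aroma_smult_subset]) auto

lemma L_rho_in_R_car: "X \<in> L_car \<Longrightarrow> f \<in> R_car \<Longrightarrow> L_rho X f \<in> R_car"
  unfolding L_rho_conv_bilin R_car_eq_free_space L_car_eq_free_space
  by (rule bilin_in_free_space[OF supp_anchor_basis_subset]) auto

lemma L_nabla_in_L_car: "X \<in> L_car \<Longrightarrow> Y \<in> L_car \<Longrightarrow> L_nabla X Y \<in> L_car"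
  unfolding L_nabla_def L_car_eq_free_space
  by (rule bilin_in_free_space[OF supp_tri_basis_subset]) auto

lemma R_one_in_R_car: "R_one \<in> R_car"
  by (simp add: R_one_def R_car_eq_free_space R_basis_def ind_in_free_space)

lemma subspace_R_car: "subspace R_car"
  by (simp add: R_car_eq_free_space subspace_free_space)

lemma subspace_L_car: "subspace L_car"
  by (simp add: L_car_eq_free_space subspace_free_space)

lemma comm_algebra_R_car: "comm_algebra R_car R_mult R_one"
  unfolding comm_algebra_def
proof (intro conjI subspace_R_car R_one_in_R_car)
  show "\<forall>f\<in>R_car. \<forall>g\<in>R_car. R_mult f g \<in> R_car"
    by (simp add: R_mult_in_R_car)
  show "\<forall>f\<in>R_car. \<forall>g\<in>R_car. \<forall>h\<in>R_car. R_mult (R_mult f g) h = R_mult f (R_mult g h)"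
    by (simp add: R_mult_assoc R_car_fin_supp)
  show "\<forall>f\<in>R_car. \<forall>g\<in>R_car. R_mult f g = R_mult g f"
    by (simp add: R_mult_commute R_car_fin_supp)
  show "\<forall>f\<in>R_car. R_mult R_one f = f"
    by (simp add: R_mult_one_left R_car_fin_supp)
  show "\<forall>f\<in>R_car. \<forall>g\<in>R_car. \<forall>h\<in>R_car. R_mult f (g + h) = R_mult f g + R_mult f h"
    by (simp add: R_mult_conv_bilin bilin_add_right R_car_fin_supp)
  show "\<forall>c. \<forall>f\<in>R_car. \<forall>g\<in>R_car. R_mult (c \<cdot>\<^sub>s f) g = c \<cdot>\<^sub>s R_mult f g"
    by (simp add: R_mult_conv_bilin bilin_smult_left R_car_fin_supp)
qed

lemma module_L_car: "is_module R_car R_mult R_one L_car L_smul"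
  unfolding is_module_def
proof (intro conjI subspace_L_car)
  show "\<forall>f\<in>R_car. \<forall>X\<in>L_car. L_smul f X \<in> L_car"
    by (simp add: L_smul_in_L_car)
  show "\<forall>f\<in>R_car. \<forall>X\<in>L_car. \<forall>Y\<in>L_car. L_smul f (X + Y) = L_smul f X + L_smul f Y"
    by (simp add: L_smul_conv_bilin bilin_add_right L_car_fin_supp)
  show "\<forall>f\<in>R_car. \<forall>g\<in>R_car. \<forall>X\<in>L_car. L_smul (f + g) X = L_smul f X + L_smul g X"
    by (simp add: L_smul_conv_bilin bilin_add_left R_car_fin_supp)
  show "\<forall>f\<in>R_car. \<forall>g\<in>R_car. \<forall>X\<in>L_car. L_smul (R_mult f g) X = L_smul f (L_smul g X)"
    by (simp add: L_smul_R_mult R_car_fin_supp L_car_fin_supp)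
  show "\<forall>X\<in>L_car. L_smul R_one X = X"
    by (simp add: L_smul_one_left L_car_fin_supp)
  show "\<forall>c. \<forall>f\<in>R_car. \<forall>X\<in>L_car. L_smul (c \<cdot>\<^sub>s f) X = c \<cdot>\<^sub>s L_smul f X"
    by (simp add: L_smul_conv_bilin bilin_smult_left R_car_fin_supp)
qed

lemma L_rho_klinear_on: "klinear_on R_car (L_rho X)"
  by (simp add: L_rho_conv_bilin R_car_eq_free_space klinear_on_bilin_right)

lemma derivation_L_rho: "X \<in> L_car \<Longrightarrow> is_derivation R_car R_mult (L_rho X)"
  by (simp add: is_derivation_def L_rho_klinear_on L_rho_in_R_car L_rho_leibniz R_car_fin_supp
      L_car_fin_supp)

lemma L_nabla_klinear_on: "klinear_on L_car (L_nabla X)"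
  by (simp add: L_nabla_def L_car_eq_free_space klinear_on_bilin_right)

lemma L_bracket_klinear_on: "klinear_on L_car (\<lambda>X. L_bracket X Z) \<and> klinear_on L_car (L_bracket Z)"
  unfolding L_nabla_def L_car_eq_free_space
  by (intro conjI klinear_on_diff klinear_on_bilin_left klinear_on_bilin_right)

lemma L_car_diff: "X \<in> L_car \<Longrightarrow> Y \<in> L_car \<Longrightarrow> X - Y \<in> L_car"
  by (simp add: L_car_eq_free_space free_space_diff)

lemma L_bracket_in_L_car: "X \<in> L_car \<Longrightarrow> Y \<in> L_car \<Longrightarrow> L_bracket X Y \<in> L_car"
  by (simp add: L_car_diff L_nabla_in_L_car)

lemma L_bracket_jacobi:
  fixes X Y Z :: "'c mon multiset \<times> 'c mon \<Rightarrow> 'k::field"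
  assumes "X \<in> L_car" "Y \<in> L_car" "Z \<in> L_car"
  shows "L_bracket X (L_bracket Y Z) + L_bracket Y (L_bracket Z X)
    + L_bracket Z (L_bracket X Y) = 0"
proof (rule pre_lie_jacobi[where V = L_car, OF _ _ _ _ assms])
  fix A A' B B' C :: "'c mon multiset \<times> 'c mon \<Rightarrow> 'k"
  assume "A \<in> L_car" "A' \<in> L_car" "B \<in> L_car" "B' \<in> L_car" "C \<in> L_car"
  then show "L_nabla A B \<in> L_car"
    and "L_nabla (A - A') B = L_nabla A B - L_nabla A' B"
    and "L_nabla A (B - B') = L_nabla A B - L_nabla A B'"
    and "L_nabla A (L_nabla B C) - L_nabla (L_nabla A B) C
      = L_nabla B (L_nabla A C) - L_nabla (L_nabla B A) C"
    by (simp_all add: L_nabla_in_L_car L_car_fin_supp L_nabla_diff_left L_nabla_diff_right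
        L_nabla_pre_lie)
qed

lemma L_bracket_L_smul_right:
  assumes "fin_supp X" "fin_supp f" "fin_supp Y"
  shows "L_bracket X (L_smul f Y) = L_smul (L_rho X f) Y + L_smul f (L_bracket X Y)"
proof -
  have "L_smul f (L_bracket X Y) = L_smul f (L_nabla X Y) - L_smul f (L_nabla Y X)"
    using assms by (simp add: L_smul_conv_bilin bilin_diff_right)
  then show ?thesis using assms by (simp add: L_nabla_L_smul_right L_nabla_L_smul_left)
qed

theorem proposition3p1:
  shows "pre_lie_rinehart (R_car :: ('c::finite mon multiset \<Rightarrow> 'k::field) set) R_mult R_one
           L_car L_smul L_rho L_nabla"
  unfolding pre_lie_rinehart_def Let_def
  using comm_algebra_R_car module_L_car L_nabla_klinear_on L_bracket_klinear_on
  by (simp add: R_car_fin_supp L_car_fin_supp derivation_L_rho L_nabla_in_L_car L_bracket_in_L_car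
      L_bracket_jacobi L_bracket_L_smul_right L_nabla_pre_lie L_rho_L_smul L_rho_bracket
      L_rho_add_left L_rho_smult_left) blast

end
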